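(* Let $\Gamma$ be a finite group and $\mathbf{E}=\bigoplus_{w\in\Gamma}\mathbf{E}_w$ a finite-dimensional associative $\bar{\mathbb{Q}}_l$-algebra with $1$, with $\dim\mathbf{E}_w=1$ and $\mathbf{E}_w\mathbf{E}_y=\mathbf{E}_{wy}$; choose basis elements $b_w\in\mathbf{E}_w$. Let $\iota:\mathbf{E}\to\mathbf{E}$ be an algebra automorphism. Let $V_1,\dots,V_{r'}$ be representatives of the isomorphism classes of simple $\mathbf{E}$-modules, numbered so that exactly for $i\in[1,r]$ there exists a $\bar{\mathbb{Q}}_l$-linear isomorphism $\iota_i:V_i\to V_i$ with $\iota_i(ev)=\iota(e)\iota_i(v)$ for all $e\in\mathbf{E}$, $v\in V_i$; fix such $\iota_i$ for $i\in[1,r]$. Then for any $w,w'\in\Gamma$, $\sum_{i=1}^r\mathrm{tr}(b_w\iota_i,V_i)\,\mathrm{tr}(\iota_i^{-1}b_{w'}^{-1},V_i)$ equals the trace of the linear map $\kappa:\mathbf{E}\to\mathbf{E}$, $e\mapsto b_{w'}^{-1}\iota^{-1}(e)b_w$. *)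

theory Defs
  imports "HOL-Algebra.Group" "Jordan_Normal_Form.Matrix"
begin

definition alg_closed_field :: "'k::field itself \<Rightarrow> bool" where
  "alg_closed_field _ \<longleftrightarrow>
     (\<forall>n::nat. \<forall>a::nat \<Rightarrow> 'k. n > 0 \<longrightarrow> (\<exists>x. x ^ n + (\<Sum>j<n. a j * x ^ j) = 0))"

text \<open>A finite-dimensional-agnostic associative unital algebra over the field 'k:
  the ring 'e (ring_1 gives associativity and 1) with a scalar multiplication
  making it a 'k-vector space, compatible with the ring multiplication.\<close>
definition is_algebra :: "('k::field \<Rightarrow> 'e::ring_1 \<Rightarrow> 'e) \<Rightarrow> bool" where
  "is_algebra s \<longleftrightarrow> vector_space s \<and>
     (\<forall>c x y. s c (x * y) = s c x * y \<and> s c (x * y) = x * s c y)"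

definition is_alg_auto :: "('k::field \<Rightarrow> 'e::ring_1 \<Rightarrow> 'e) \<Rightarrow> ('e \<Rightarrow> 'e) \<Rightarrow> bool" where
  "is_alg_auto s f \<longleftrightarrow> bij f \<and> Vector_Spaces.linear s s f \<and>
     (\<forall>x y. f (x * y) = f x * f y) \<and> f 1 = 1"

definition ring_inv :: "'e::ring_1 \<Rightarrow> 'e" where
  "ring_inv x = (THE y. x * y = 1 \<and> y * x = 1)"

definition lin_trace :: "('k::field \<Rightarrow> 'v::ab_group_add \<Rightarrow> 'v) \<Rightarrow> 'v set \<Rightarrow> ('v \<Rightarrow> 'v) \<Rightarrow> 'k" where
  "lin_trace s V f =
     (let B = (SOME B. B \<subseteq> V \<and> \<not> module.dependent s B \<and> module.span s B = V)
      in \<Sum>b\<in>B. module.representation s B (f b) b)"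

definition mat_trace :: "'a::comm_ring_1 mat \<Rightarrow> 'a" where
  "mat_trace A = (\<Sum>i<dim_row A. A $$ (i, i))"

definition mat_inv :: "'a::comm_ring_1 mat \<Rightarrow> 'a mat" where
  "mat_inv A = (THE B. B \<in> carrier_mat (dim_row A) (dim_row A) \<and>
                    A * B = 1\<^sub>m (dim_row A) \<and> B * A = 1\<^sub>m (dim_row A))"

text \<open>A (finite-dimensional) module over the algebra (s, 'e) of dimension n,
  given by its representation matrices (w.r.t. a basis of k^n).\<close>
definition is_rep :: "('k::field \<Rightarrow> 'e::ring_1 \<Rightarrow> 'e) \<Rightarrow> nat \<Rightarrow> ('e \<Rightarrow> 'k mat) \<Rightarrow> bool" where
  "is_rep s n \<rho> \<longleftrightarrow>
     (\<forall>e. \<rho> e \<in> carrier_mat n n) \<and>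
     (\<forall>x y. \<rho> (x + y) = \<rho> x + \<rho> y) \<and>
     (\<forall>c x. \<rho> (s c x) = c \<cdot>\<^sub>m \<rho> x) \<and>
     (\<forall>x y. \<rho> (x * y) = \<rho> x * \<rho> y) \<and>
     \<rho> 1 = 1\<^sub>m n"

definition is_simple_rep :: "('k::field \<Rightarrow> 'e::ring_1 \<Rightarrow> 'e) \<Rightarrow> nat \<Rightarrow> ('e \<Rightarrow> 'k mat) \<Rightarrow> bool" where
  "is_simple_rep s n \<rho> \<longleftrightarrow> is_rep s n \<rho> \<and> n > 0 \<and>
     (\<forall>W \<subseteq> carrier_vec n.
        (0\<^sub>v n \<in> W \<and> (\<forall>v\<in>W. \<forall>u\<in>W. v + u \<in> W) \<and> (\<forall>c. \<forall>v\<in>W. c \<cdot>\<^sub>v v \<in> W) \<and>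
         (\<forall>e. \<forall>v\<in>W. \<rho> e *\<^sub>v v \<in> W))
        \<longrightarrow> W = {0\<^sub>v n} \<or> W = carrier_vec n)"

definition rep_iso :: "nat \<Rightarrow> ('e \<Rightarrow> 'k::field mat) \<Rightarrow> nat \<Rightarrow> ('e \<Rightarrow> 'k mat) \<Rightarrow> bool" where
  "rep_iso n \<rho> m \<sigma> \<longleftrightarrow> n = m \<and>
     (\<exists>P \<in> carrier_mat n n. invertible_mat P \<and> (\<forall>e. P * \<rho> e = \<sigma> e * P))"

end

theory Submission
  imports Defs "Jordan_Normal_Form.Char_Poly"
begin

text \<open>
  Let \<open>\<tau> e\<close> be the coefficient of \<open>1\<close> in \<open>e\<close>. The bases \<open>b x\<close> and \<open>(b x)\<^sup>-\<^sup>1\<close> of \<open>E\<close> are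
  dual for the form \<open>\<tau> (u v)\<close>, so every linear endomorphism \<open>f\<close> of \<open>E\<close> has trace
  \<open>\<Sum>\<^sub>x \<tau> (f (b x) (b x)\<^sup>-\<^sup>1)\<close>. Since \<open>|\<Gamma>|\<close> is invertible, \<open>E\<close> is semisimple (Maschke), and the
  central idempotents built from the characters of the \<open>V\<^sub>i\<close> give
  \<open>\<tau> = \<Sum>\<^sub>i (dim V\<^sub>i / |\<Gamma>|) tr (-, V\<^sub>i)\<close>. Hence
  \<open>tr \<kappa> = \<Sum>\<^sub>i (dim V\<^sub>i / |\<Gamma>|) tr ((b w')\<^sup>-\<^sup>1 T\<^sub>i, V\<^sub>i)\<close> with
  \<open>T\<^sub>i = \<Sum>\<^sub>x \<iota>\<^sup>-\<^sup>1 (b x) b w (b x)\<^sup>-\<^sup>1\<close> acting on \<open>V\<^sub>i\<close>; this average intertwines the twist of \<open>V\<^sub>i\<close>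
  by \<open>\<iota>\<^sup>-\<^sup>1\<close> with \<open>V\<^sub>i\<close>. By Schur's lemma \<open>T\<^sub>i = 0\<close> unless \<open>V\<^sub>i\<close> is \<open>\<iota>\<close>-stable, and otherwise
  \<open>\<iota>\<^sub>i T\<^sub>i\<close> is the scalar \<open>(|\<Gamma>| / dim V\<^sub>i) tr (\<iota>\<^sub>i b w, V\<^sub>i)\<close>, which produces the product of traces.
\<close>

section \<open>Matrices\<close>

text \<open>The library's \<open>sum\<close> does not apply to matrices, whose zero depends on the dimensions.\<close>
definition mat_sum :: "nat \<Rightarrow> nat \<Rightarrow> ('x \<Rightarrow> 'a::comm_ring_1 mat) \<Rightarrow> 'x set \<Rightarrow> 'a mat" where
  "mat_sum n m f S = mat n m (\<lambda>(p, q). \<Sum>x\<in>S. f x $$ (p, q))"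

lemma mat_sum_carrier [simp]: "mat_sum n m f S \<in> carrier_mat n m"
  unfolding mat_sum_def by simp

lemma dim_mat_sum [simp]: "dim_row (mat_sum n m f S) = n" "dim_col (mat_sum n m f S) = m"
  unfolding mat_sum_def by simp_all

lemma index_mat_sum [simp]:
  "p < n \<Longrightarrow> q < m \<Longrightarrow> mat_sum n m f S $$ (p, q) = (\<Sum>x\<in>S. f x $$ (p, q))"
  unfolding mat_sum_def by simp

lemma mat_sum_cong:
  "(\<And>x. x \<in> S \<Longrightarrow> f x = g x) \<Longrightarrow> mat_sum n m f S = mat_sum n m g S"
  unfolding mat_sum_def by (auto intro!: cong_mat sum.cong)

lemma index_mult_mat_carrier:
  "A \<in> carrier_mat a n \<Longrightarrow> B \<in> carrier_mat n c \<Longrightarrow> p < a \<Longrightarrow> q < c \<Longrightarrow>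
    (A * B) $$ (p, q) = (\<Sum>k<n. A $$ (p, k) * B $$ (k, q))"
  by (auto simp: scalar_prod_def intro!: sum.cong)

lemma mult_mat_sum:
  assumes A: "A \<in> carrier_mat a n" and f: "\<And>x. x \<in> S \<Longrightarrow> f x \<in> carrier_mat n m"
  shows "A * mat_sum n m f S = mat_sum a m (\<lambda>x. A * f x) S"
proof (rule eq_matI)
  fix p q assume "p < dim_row (mat_sum a m (\<lambda>x. A * f x) S)" "q < dim_col (mat_sum a m (\<lambda>x. A * f x) S)"
  hence p: "p < a" and q: "q < m" by auto
  have "(A * mat_sum n m f S) $$ (p, q) = (\<Sum>k<n. A $$ (p, k) * (\<Sum>x\<in>S. f x $$ (k, q)))"
    using index_mult_mat_carrier[OF A mat_sum_carrier p q] q by simp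
  also have "\<dots> = (\<Sum>x\<in>S. \<Sum>k<n. A $$ (p, k) * f x $$ (k, q))"
    by (simp add: sum_distrib_left sum.swap[of _ S])
  also have "\<dots> = (\<Sum>x\<in>S. (A * f x) $$ (p, q))"
    using index_mult_mat_carrier[OF A f p q] by simp
  finally show "(A * mat_sum n m f S) $$ (p, q) = mat_sum a m (\<lambda>x. A * f x) S $$ (p, q)"
    using p q by simp
qed (use A in auto)

lemma mat_sum_mult:
  assumes B: "B \<in> carrier_mat m c" and f: "\<And>x. x \<in> S \<Longrightarrow> f x \<in> carrier_mat n m"
  shows "mat_sum n m f S * B = mat_sum n c (\<lambda>x. f x * B) S"
proof (rule eq_matI)
  fix p q assume "p < dim_row (mat_sum n c (\<lambda>x. f x * B) S)" "q < dim_col (mat_sum n c (\<lambda>x. f x * B) S)"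
  hence p: "p < n" and q: "q < c" by auto
  have "(mat_sum n m f S * B) $$ (p, q) = (\<Sum>k<m. (\<Sum>x\<in>S. f x $$ (p, k)) * B $$ (k, q))"
    using index_mult_mat_carrier[OF mat_sum_carrier B p q] p by simp
  also have "\<dots> = (\<Sum>x\<in>S. \<Sum>k<m. f x $$ (p, k) * B $$ (k, q))"
    by (simp add: sum_distrib_right sum.swap[of _ S])
  also have "\<dots> = (\<Sum>x\<in>S. (f x * B) $$ (p, q))"
    using index_mult_mat_carrier[OF f B p q] by simp
  finally show "(mat_sum n m f S * B) $$ (p, q) = mat_sum n c (\<lambda>x. f x * B) S $$ (p, q)"
    using p q by simp
qed (use B in auto)

lemma mat_trace_mat_sum:
  "(\<And>x. x \<in> S \<Longrightarrow> f x \<in> carrier_mat n n) \<Longrightarrow> mat_trace (mat_sum n n f S) = (\<Sum>x\<in>S. mat_trace (f x))"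
  unfolding mat_trace_def by (auto simp add: sum.swap[of _ S] intro!: sum.cong)

lemma mat_trace_mult_comm:
  assumes A: "A \<in> carrier_mat n m" and B: "B \<in> carrier_mat m n"
  shows "mat_trace (A * B) = mat_trace (B * A)"
proof -
  have "mat_trace (A * B) = (\<Sum>i<n. \<Sum>k<m. A $$ (i, k) * B $$ (k, i))"
    unfolding mat_trace_def using A B index_mult_mat_carrier[OF A B] by (intro sum.cong) auto
  also have "\<dots> = (\<Sum>k<m. \<Sum>i<n. B $$ (k, i) * A $$ (i, k))"
    by (subst sum.swap) (simp add: mult.commute)
  also have "\<dots> = mat_trace (B * A)"
    unfolding mat_trace_def using A B index_mult_mat_carrier[OF B A] by (intro sum.cong) auto
  finally show ?thesis .
qed

lemma mat_trace_add:
  "A \<in> carrier_mat n n \<Longrightarrow> B \<in> carrier_mat n n \<Longrightarrow> mat_trace (A + B) = mat_trace A + mat_trace B"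
  unfolding mat_trace_def by (auto simp: sum.distrib[symmetric] intro!: sum.cong)

lemma mat_trace_smult: "A \<in> carrier_mat n n \<Longrightarrow> mat_trace (c \<cdot>\<^sub>m A) = c * mat_trace A"
  unfolding mat_trace_def by (auto simp add: sum_distrib_left intro!: sum.cong)

lemma mat_trace_one [simp]: "mat_trace (1\<^sub>m n) = of_nat n"
  unfolding mat_trace_def by simp

lemma mat_trace_zero [simp]: "mat_trace (0\<^sub>m n n) = 0"
  unfolding mat_trace_def by simp

lemma mat_trace_conj:
  assumes A: "A \<in> carrier_mat n n" and A': "A' \<in> carrier_mat n n" and Z: "Z \<in> carrier_mat n n"
    and inv: "A' * A = 1\<^sub>m n"
  shows "mat_trace (A * Z * A') = mat_trace Z"
proof -
  have "mat_trace (A * Z * A') = mat_trace (A * (Z * A'))"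
    using A Z A' by (simp add: assoc_mult_mat)
  also have "\<dots> = mat_trace (Z * A' * A)"
    using A Z A' by (simp add: mat_trace_mult_comm[of A n n])
  also have "Z * A' * A = Z"
    using A Z A' inv by (simp add: assoc_mult_mat)
  finally show ?thesis .
qed

definition mat_unit :: "nat \<Rightarrow> nat \<Rightarrow> nat \<Rightarrow> nat \<Rightarrow> 'a::comm_ring_1 mat" where
  "mat_unit n m q t = mat n m (\<lambda>(i, j). if i = q \<and> j = t then 1 else 0)"

lemma mat_unit_carrier [simp]: "mat_unit n m q t \<in> carrier_mat n m"
  unfolding mat_unit_def by simp

lemma index_mult_mat_unit_mult:
  assumes A: "A \<in> carrier_mat a n" and B: "B \<in> carrier_mat m c"
    and q: "q < n" and t: "t < m" and p: "p < a" and l: "l < c"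
  shows "(A * mat_unit n m q t * B) $$ (p, l) = A $$ (p, q) * B $$ (t, l)"
proof -
  have AU: "(A * mat_unit n m q t) $$ (p, j) = (if j = t then A $$ (p, q) else 0)" if j: "j < m" for j
  proof -
    have "(A * mat_unit n m q t) $$ (p, j) = (\<Sum>k<n. A $$ (p, k) * mat_unit n m q t $$ (k, j))"
      by (rule index_mult_mat_carrier[OF A mat_unit_carrier p j])
    also have "\<dots> = (\<Sum>k<n. if k = q then (if j = t then A $$ (p, q) else 0) else 0)"
      using j by (intro sum.cong) (auto simp: mat_unit_def)
    finally show ?thesis using q by simp
  qed
  have "(A * mat_unit n m q t * B) $$ (p, l) = (\<Sum>j<m. (A * mat_unit n m q t) $$ (p, j) * B $$ (j, l))"
    using A by (intro index_mult_mat_carrier[OF _ B p l]) simp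
  also have "\<dots> = (\<Sum>j<m. if j = t then A $$ (p, q) * B $$ (t, l) else 0)"
    by (rule sum.cong) (simp_all add: AU)
  finally show ?thesis using t by simp
qed

lemma mat_trace_mat_unit:
  "q < n \<Longrightarrow> t < n \<Longrightarrow> mat_trace (mat_unit n n q t) = (if q = t then 1 else 0)"
  unfolding mat_trace_def mat_unit_def by (cases "q = t") (auto intro: sum.neutral)

lemma eq_mat_on_vecI:
  assumes A: "(A :: 'a::comm_ring_1 mat) \<in> carrier_mat n m" and B: "B \<in> carrier_mat n m"
    and eq: "\<And>v. v \<in> carrier_vec m \<Longrightarrow> A *\<^sub>v v = B *\<^sub>v v"
  shows "A = B"
proof (rule eq_matI)
  fix i j assume "i < dim_row B" "j < dim_col B"
  hence i: "i < n" and j: "j < m" using B by auto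
  have col: "(M *\<^sub>v unit_vec m j) $ i = M $$ (i, j)" if "M \<in> carrier_mat n m" for M :: "'a mat"
  proof -
    have "(M *\<^sub>v unit_vec m j) $ i = (\<Sum>k\<in>{0..<m}. M $$ (i, k) * (if k = j then 1 else 0))"
      using that i j by (simp add: scalar_prod_def unit_vec_def)
    also have "\<dots> = (\<Sum>k\<in>{0..<m}. if k = j then M $$ (i, k) else 0)"
      by (rule sum.cong) auto
    finally show ?thesis using j by simp
  qed
  show "A $$ (i, j) = B $$ (i, j)" using col[OF A] col[OF B] eq[of "unit_vec m j"] by simp
qed (use A B in auto)

lemma dim_le_if_mult_vec_inj:
  fixes A :: "'a::field mat"
  assumes A: "A \<in> carrier_mat m n"
    and inj: "\<And>v. v \<in> carrier_vec n \<Longrightarrow> A *\<^sub>v v = 0\<^sub>v m \<Longrightarrow> v = 0\<^sub>v n"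
  shows "n \<le> m"
proof (rule ccontr)
  assume "\<not> n \<le> m"
  hence mn: "m < n" by simp
  txt \<open>Pad \<open>A\<close> with zero rows to a square matrix; its last row vanishes, so it is singular.\<close>
  define A' where "A' = mat n n (\<lambda>(i, j). if i < m then A $$ (i, j) else 0)"
  have A'c: "A' \<in> carrier_mat n n" unfolding A'_def by simp
  have "transpose_mat A' *\<^sub>v unit_vec n (n - 1) = 0\<^sub>v n"
    using mn by (intro eq_vecI) (auto simp: A'_def)
  moreover have "unit_vec n (n - 1) \<noteq> (0\<^sub>v n :: 'a vec)"
    using mn by (metis diff_less index_unit_vec(1) index_zero_vec(1) less_nat_zero_code
        not_gr_zero one_neq_zero zero_less_one)
  ultimately have "det (transpose_mat A') = 0"
    using det_0_iff_vec_prod_zero_field[of "transpose_mat A'" n] A'c by (metis transpose_carrier_mat unit_vec_carrier)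
  hence "det A' = 0" using det_transpose[OF A'c] by simp
  then obtain v where v: "v \<in> carrier_vec n" "v \<noteq> 0\<^sub>v n" "A' *\<^sub>v v = 0\<^sub>v n"
    using det_0_iff_vec_prod_zero_field[OF A'c] by blast
  have "A *\<^sub>v v = 0\<^sub>v m"
  proof (rule eq_vecI)
    fix i assume "i < dim_vec (0\<^sub>v m :: 'a vec)"
    hence i: "i < m" by simp
    have "(A *\<^sub>v v) $ i = (A' *\<^sub>v v) $ i"
      using i mn A v(1) by (auto simp: A'_def scalar_prod_def intro!: sum.cong)
    thus "(A *\<^sub>v v) $ i = 0\<^sub>v m $ i" using v(3) i mn by simp
  qed (use A in simp)
  from inj[OF v(1) this] v(2) show False by simp
qed

lemma dim_le_if_mult_vec_surj:
  fixes A :: "'a::field mat"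
  assumes A: "A \<in> carrier_mat m n"
    and surj: "\<And>u. u \<in> carrier_vec m \<Longrightarrow> \<exists>v\<in>carrier_vec n. A *\<^sub>v v = u"
  shows "m \<le> n"
proof (rule dim_le_if_mult_vec_inj[of "transpose_mat A" n m])
  show "transpose_mat A \<in> carrier_mat n m" using A by simp
  fix u :: "'a vec" assume u: "u \<in> carrier_vec m" and Au: "transpose_mat A *\<^sub>v u = 0\<^sub>v n"
  show "u = 0\<^sub>v m"
  proof (rule eq_vecI)
    fix p assume "p < dim_vec (0\<^sub>v m :: 'a vec)"
    hence p: "p < m" by simp
    obtain v where v: "v \<in> carrier_vec n" "A *\<^sub>v v = unit_vec m p" using surj[of "unit_vec m p"] by auto
    have "u $ p = u \<bullet> (A *\<^sub>v v)" using p v by (simp add: scalar_prod_right_unit)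
    also have "\<dots> = (transpose_mat A *\<^sub>v u) \<bullet> v" using transpose_vec_mult_scalar[OF A v(1) u] by simp
    also have "\<dots> = 0" using Au v(1) by simp
    finally show "u $ p = 0\<^sub>v m $ p" using p by simp
  qed (use u in simp)
qed

lemma invertible_mat_if_mult_vec_inj:
  fixes A :: "'a::field mat"
  assumes A: "A \<in> carrier_mat n n"
    and inj: "\<And>v. v \<in> carrier_vec n \<Longrightarrow> A *\<^sub>v v = 0\<^sub>v n \<Longrightarrow> v = 0\<^sub>v n"
  shows "invertible_mat A"
proof -
  have "det A \<noteq> 0"
    using det_0_iff_vec_prod_zero_field[OF A] inj by blast
  from det_non_zero_imp_unit[OF A this, of "()"]
  obtain B where B: "B \<in> carrier_mat n n" "B * A = 1\<^sub>m n" "A * B = 1\<^sub>m n"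
    unfolding Units_def by (auto simp: ring_mat_simps)
  show ?thesis unfolding invertible_mat_def inverts_mat_def using A B by auto
qed

lemma mat_inv_correct:
  fixes A :: "'a::comm_ring_1 mat"
  assumes A: "A \<in> carrier_mat n n" and inv: "invertible_mat A"
  shows "mat_inv A \<in> carrier_mat n n" "A * mat_inv A = 1\<^sub>m n" "mat_inv A * A = 1\<^sub>m n"
proof -
  from inv A obtain B where AB: "A * B = 1\<^sub>m n" and BA: "B * A = 1\<^sub>m (dim_row B)"
    unfolding invertible_mat_def inverts_mat_def by auto
  have Bc: "B \<in> carrier_mat n n"
    using A AB BA by (metis carrier_matD carrier_matI index_mult_mat(2,3) index_one_mat(2,3))
  have BA': "B * A = 1\<^sub>m n" using BA Bc by simp
  have "mat_inv A = B" unfolding mat_inv_def carrier_matD(1)[OF A]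
  proof (rule the_equality)
    show "B \<in> carrier_mat n n \<and> A * B = 1\<^sub>m n \<and> B * A = 1\<^sub>m n" using Bc AB BA' by simp
    fix C assume "C \<in> carrier_mat n n \<and> A * C = 1\<^sub>m n \<and> C * A = 1\<^sub>m n"
    hence C: "C \<in> carrier_mat n n" "C * A = 1\<^sub>m n" by simp_all
    have "C = C * (A * B)" using C by (simp add: AB)
    also have "\<dots> = (C * A) * B" by (rule assoc_mult_mat[symmetric, OF C(1) A Bc])
    finally show "C = B" using C Bc by simp
  qed
  thus "mat_inv A \<in> carrier_mat n n" "A * mat_inv A = 1\<^sub>m n" "mat_inv A * A = 1\<^sub>m n"
    using Bc AB BA' by simp_all
qed

lemma alg_closed_poly_root:
  fixes p :: "'k::field poly"
  assumes cl: "alg_closed_field TYPE('k)" and p: "degree p = n" "coeff p n = 1" and n: "n > 0"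
  shows "\<exists>x. poly p x = 0"
proof -
  from cl n obtain x where x: "x ^ n + (\<Sum>j<n. coeff p j * x ^ j) = 0"
    unfolding alg_closed_field_def by blast
  have "poly p x = (\<Sum>j<n. coeff p j * x ^ j) + coeff p n * x ^ n"
    using p by (simp add: poly_altdef lessThan_Suc_atMost[symmetric])
  thus ?thesis using x p by (auto simp: add.commute)
qed

lemma alg_closed_eigenvector_exists:
  fixes A :: "'k::field mat"
  assumes cl: "alg_closed_field TYPE('k)" and A: "A \<in> carrier_mat n n" and n: "n > 0"
  obtains c v where "v \<in> carrier_vec n" "v \<noteq> 0\<^sub>v n" "A *\<^sub>v v = c \<cdot>\<^sub>v v"
proof -
  obtain c where "poly (char_poly A) c = 0"
    using alg_closed_poly_root[OF cl _ _ n] degree_monic_char_poly[OF A] by blast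
  hence "eigenvalue A c" using eigenvalue_root_char_poly[OF A] by simp
  thus ?thesis using that A unfolding eigenvalue_def eigenvector_def by auto
qed

lemma smult_mat_mult_vec:
  "A \<in> carrier_mat n m \<Longrightarrow> v \<in> carrier_vec m \<Longrightarrow> (c \<cdot>\<^sub>m A) *\<^sub>v v = c \<cdot>\<^sub>v (A *\<^sub>v v :: 'a::comm_ring_1 vec)"
  by auto

lemma smult_mult_mult_smult:
  fixes A X B :: "'k::comm_ring_1 mat"
  assumes A: "A \<in> carrier_mat m m" and X: "X \<in> carrier_mat m n" and B: "B \<in> carrier_mat n n"
  shows "(c \<cdot>\<^sub>m A) * X * (d \<cdot>\<^sub>m B) = (c * d) \<cdot>\<^sub>m (A * X * B)"
proof -
  have AX: "A * X \<in> carrier_mat m n" using A X by simp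
  have "(c \<cdot>\<^sub>m A) * X * (d \<cdot>\<^sub>m B) = c \<cdot>\<^sub>m (A * X * (d \<cdot>\<^sub>m B))"
    using mult_smult_assoc_mat[OF A X] mult_smult_assoc_mat[OF AX smult_carrier_mat[OF B]] by simp
  also have "A * X * (d \<cdot>\<^sub>m B) = d \<cdot>\<^sub>m (A * X * B)"
    using mult_smult_distrib[OF AX B] .
  finally show ?thesis by auto
qed

lemma mat_inv_intertwines:
  fixes P :: "'a::comm_ring_1 mat"
  assumes P: "P \<in> carrier_mat n n" "invertible_mat P" and A: "A \<in> carrier_mat n n" and B: "B \<in> carrier_mat n n"
    and PA: "P * A = B * P"
  shows "mat_inv P * B = A * mat_inv P"
proof -
  define K where "K = mat_inv P"
  have K: "K \<in> carrier_mat n n" "P * K = 1\<^sub>m n" "K * P = 1\<^sub>m n"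
    unfolding K_def using mat_inv_correct[OF P] by auto
  have "K * B = K * B * (P * K)" using K B by simp
  also have "\<dots> = K * (B * P) * K"
    using assoc_mult_mat[OF mult_carrier_mat[OF K(1) B] P(1) K(1)] assoc_mult_mat[OF K(1) B P(1)] by simp
  also have "\<dots> = (K * P) * A * K" using assoc_mult_mat[OF K(1) P(1) A] by (simp add: PA)
  also have "\<dots> = A * K" using K A by simp
  finally show ?thesis unfolding K_def .
qed

lemma invertible_mat_mat_inv:
  assumes "A \<in> carrier_mat n n" "invertible_mat A"
  shows "invertible_mat (mat_inv A)"
  using mat_inv_correct[OF assms] assms(1) unfolding invertible_mat_def inverts_mat_def by auto

section \<open>Linear algebra\<close>

definition vec_comb :: "('a \<Rightarrow> 'b \<Rightarrow> 'b) \<Rightarrow> (nat \<Rightarrow> 'b) \<Rightarrow> 'a vec \<Rightarrow> 'b::comm_monoid_add" where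
  "vec_comb scale u x = (\<Sum>k<dim_vec x. scale (x $ k) (u k))"

context vector_space
begin

lemma vec_comb_add:
  "x \<in> carrier_vec n \<Longrightarrow> y \<in> carrier_vec n \<Longrightarrow> vec_comb scale u (x + y) = vec_comb scale u x + vec_comb scale u y"
  unfolding vec_comb_def by (simp add: sum.distrib scale_left_distrib)

lemma vec_comb_smult: "vec_comb scale u (c \<cdot>\<^sub>v x) = scale c (vec_comb scale u x)"
  unfolding vec_comb_def by (simp add: scale_sum_right)

lemma vec_comb_zero: "vec_comb scale u (0\<^sub>v n) = 0"
  unfolding vec_comb_def by simp

lemma vec_comb_mem: "subspace M \<Longrightarrow> (\<And>k. k < dim_vec x \<Longrightarrow> u k \<in> M) \<Longrightarrow> vec_comb scale u x \<in> M"
  unfolding vec_comb_def by (auto intro!: subspace_sum subspace_scale)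

end

lemma (in finite_dimensional_vector_space) subspace_coordinates:
  assumes M: "subspace M"
  obtains n u where "\<And>k. k < n \<Longrightarrow> u k \<in> M" "bij_betw (vec_comb scale u) (carrier_vec n) M"
proof -
  obtain B where B: "B \<subseteq> M" "independent B" "M \<subseteq> span B"
    by (rule basis_exists)
  have Bf: "finite B" using finiteI_independent[OF B(2)] .
  have spB: "span B = M" using B(1,3) span_minimal[OF B(1) M] by auto
  obtain vs where vs: "distinct vs" "set vs = B" using finite_distinct_list[OF Bf] by blast
  define n where "n = length vs"
  define u where "u k = vs ! k" for k
  have uB: "u k \<in> B" if "k < n" for k using that vs unfolding n_def u_def by auto
  have u_eq: "u j = u k \<longleftrightarrow> j = k" if "j < n" "k < n" for j k
    using vs(1) that unfolding n_def u_def by (simp add: nth_eq_iff_index_eq)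
  define crd where "crd v = vec n (\<lambda>k. representation B v (u k))" for v
  have comb_crd: "vec_comb scale u (crd v) = v" if v: "v \<in> M" for v
  proof -
    have "vec_comb scale u (crd v) = (\<Sum>k<n. scale (representation B v (vs ! k)) (vs ! k))"
      unfolding vec_comb_def crd_def u_def by simp
    also have "\<dots> = (\<Sum>b\<in>B. scale (representation B v b) b)"
      using sum.reindex_bij_betw[OF bij_betw_nth[OF vs(1) refl vs(2)[symmetric]],
          of "\<lambda>b. scale (representation B v b) b"] n_def by simp
    also have "\<dots> = v" using sum_representation_eq[OF B(2) _ Bf subset_refl] v spB by simp
    finally show ?thesis .
  qed
  have crd_comb: "crd (vec_comb scale u x) = x" if x: "x \<in> carrier_vec n" for x
  proof (rule eq_vecI)
    fix k assume "k < dim_vec x"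
    hence k: "k < n" using x by simp
    have "crd (vec_comb scale u x) $ k = (\<Sum>j<n. x $ j * representation B (u j) (u k))"
      using x k uB representation_sum[OF B(2), of "{..<n}" "\<lambda>j. scale (x $ j) (u j)"]
        representation_scale[OF B(2)] span_base
      by (simp add: crd_def vec_comb_def span_scale)
    also have "\<dots> = (\<Sum>j<n. if j = k then x $ j else 0)"
      using representation_basis[OF B(2) uB] u_eq k by (intro sum.cong) auto
    finally show "crd (vec_comb scale u x) $ k = x $ k" using k by simp
  qed (use x in \<open>simp add: crd_def\<close>)
  have "vec_comb scale u x \<in> M" if "x \<in> carrier_vec n" for x
    using that uB B(1) by (intro vec_comb_mem[OF M]) auto
  hence "bij_betw (vec_comb scale u) (carrier_vec n) M"
    by (intro bij_betw_byWitness[where f' = crd]) (use comb_crd crd_comb in \<open>auto simp: crd_def\<close>)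
  with that uB B(1) show ?thesis by blast
qed

lemma (in vector_space) exists_linear_projection:
  assumes A: "subspace A"
  obtains p where "Vector_Spaces.linear scale scale p" "\<And>v. p v \<in> A" "\<And>v. v \<in> A \<Longrightarrow> p v = v"
proof -
  interpret VP: vector_space_pair scale scale by unfold_locales
  obtain BA where BA: "BA \<subseteq> A" "independent BA" "A \<subseteq> span BA" by (rule basis_exists)
  define p where "p = VP.construct BA (\<lambda>v. v)"
  have p: "Vector_Spaces.linear scale scale p" unfolding p_def by (rule VP.linear_construct[OF BA(2)])
  have id: "Vector_Spaces.linear scale scale (\<lambda>v. v)"
    by (simp add: Vector_Spaces.linear_iff vector_space_axioms)
  have pA: "p v = v" if "v \<in> A" for v
    using VP.linear_eq_on[OF p id, of v BA] BA that VP.construct_basis[OF BA(2)] unfolding p_def by blast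
  have "p v \<in> A" for v
  proof -
    have "v \<in> span (extend_basis BA)" using span_extend_basis[OF BA(2)] by simp
    thus ?thesis
    proof (rule span_induct)
      have "p 0 = 0" using p unfolding Vector_Spaces.linear_iff by (metis scale_zero_left)
      thus "subspace {v. p v \<in> A}"
        using A p unfolding subspace_def Vector_Spaces.linear_iff by auto
      fix x assume x: "x \<in> extend_basis BA"
      show "p x \<in> A"
      proof (cases "x \<in> BA")
        case True thus ?thesis using pA BA(1) by auto
      next
        case False
        hence "x \<in> span (extend_basis BA - BA)" using x span_base by blast
        hence "p x = 0" unfolding p_def by (rule VP.construct_outside[OF BA(2)])
        thus ?thesis using subspace_0[OF A] by simp
      qed
    qed
  qed
  with that p pA show ?thesis by blast
qed

lemma (in finite_dimensional_vector_space) lin_trace_dual_frame: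
  assumes I: "finite I"
    and f_add: "\<And>v w. f (v + w) = f v + f w" and f_scale: "\<And>c v. f (scale c v) = scale c (f v)"
    and \<phi>_add: "\<And>x v w. \<phi> x (v + w) = \<phi> x v + \<phi> x w" and \<phi>_scale: "\<And>x c v. \<phi> x (scale c v) = c * \<phi> x v"
    and frame: "\<And>v. v = (\<Sum>x\<in>I. scale (\<phi> x v) (u x))"
  shows "lin_trace scale UNIV f = (\<Sum>x\<in>I. \<phi> x (f (u x)))"
proof -
  define P where "P B \<longleftrightarrow> B \<subseteq> UNIV \<and> \<not> dependent B \<and> span B = UNIV" for B
  have "P Basis" using independent_Basis span_Basis P_def by simp
  hence "P (SOME B. P B)" by (rule someI)
  then obtain B where B: "B = (SOME B. P B)" "independent B" "span B = UNIV" unfolding P_def by auto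
  have Bf: "finite B" using finiteI_independent[OF B(2)] .
  let ?r = "representation B"
  have r_sum: "?r (sum g A) v = (\<Sum>i\<in>A. ?r (g i) v)" for g A v
    using representation_sum[OF B(2), of A g] B(3) by simp
  have r_scale: "?r (scale c w) v = c * ?r w v" for c w v
    using representation_scale[OF B(2)] B(3) by simp
  have \<phi>_sum: "\<phi> x (sum g A) = (\<Sum>i\<in>A. \<phi> x (g i))" for x g A
    using sum_comp_morphism[of "\<phi> x" g A] \<phi>_add \<phi>_scale[of x 0 0] by (simp add: comp_def)
  have f_sum: "f (sum g A) = (\<Sum>i\<in>A. f (g i))" for g A
    using sum_comp_morphism[of f g A] f_add f_scale[of 0 0] by (simp add: comp_def)
  have diag: "?r (f v) v = (\<Sum>x\<in>I. \<phi> x v * ?r (f (u x)) v)" for v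
  proof -
    have "f v = (\<Sum>x\<in>I. scale (\<phi> x v) (f (u x)))"
      by (subst frame) (simp add: f_sum f_scale)
    thus ?thesis by (simp add: r_sum r_scale)
  qed
  have dual: "(\<Sum>v\<in>B. ?r w v * \<phi> x v) = \<phi> x w" for w x
  proof -
    have "(\<Sum>v\<in>B. ?r w v * \<phi> x v) = \<phi> x (\<Sum>v\<in>B. scale (?r w v) v)"
      by (simp add: \<phi>_sum \<phi>_scale)
    also have "(\<Sum>v\<in>B. scale (?r w v) v) = w"
      using sum_representation_eq[OF B(2) _ Bf subset_refl] B(3) by simp
    finally show ?thesis .
  qed
  have "lin_trace scale UNIV f = (\<Sum>v\<in>B. ?r (f v) v)"
    unfolding lin_trace_def Let_def B(1) P_def by simp
  also have "\<dots> = (\<Sum>x\<in>I. \<Sum>v\<in>B. ?r (f (u x)) v * \<phi> x v)"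
    by (simp add: diag sum.swap[of _ I] mult.commute)
  also have "\<dots> = (\<Sum>x\<in>I. \<phi> x (f (u x)))" by (simp add: dual)
  finally show ?thesis .
qed

section \<open>Representations of algebras\<close>

lemma is_repD:
  assumes "is_rep s n \<rho>"
  shows "\<rho> e \<in> carrier_mat n n" "\<rho> (x + y) = \<rho> x + \<rho> y" "\<rho> (s c x) = c \<cdot>\<^sub>m \<rho> x"
    "\<rho> (x * y) = \<rho> x * \<rho> y" "\<rho> 1 = 1\<^sub>m n"
  using assms unfolding is_rep_def by auto

lemma is_simple_repD:
  assumes "is_simple_rep s n \<rho>"
  shows "is_rep s n \<rho>" "n > 0"
  using assms unfolding is_simple_rep_def by auto

lemma is_simple_rep_invariant_trivial:
  assumes "is_simple_rep s n \<rho>" and "W \<subseteq> carrier_vec n" "0\<^sub>v n \<in> W"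
    and "\<And>v u. v \<in> W \<Longrightarrow> u \<in> W \<Longrightarrow> v + u \<in> W" "\<And>c v. v \<in> W \<Longrightarrow> c \<cdot>\<^sub>v v \<in> W"
    and "\<And>e v. v \<in> W \<Longrightarrow> \<rho> e *\<^sub>v v \<in> W"
  shows "W = {0\<^sub>v n} \<or> W = carrier_vec n"
proof -
  have "0\<^sub>v n \<in> W \<and> (\<forall>v\<in>W. \<forall>u\<in>W. v + u \<in> W) \<and> (\<forall>c. \<forall>v\<in>W. c \<cdot>\<^sub>v v \<in> W) \<and>
      (\<forall>e. \<forall>v\<in>W. \<rho> e *\<^sub>v v \<in> W)"
    using assms(3-6) by simp
  with assms(1,2) show ?thesis unfolding is_simple_rep_def by simp
qed

lemma schur_scalar:
  assumes cl: "alg_closed_field TYPE('k::field)" and \<rho>: "is_simple_rep s n \<rho>"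
    and A: "A \<in> carrier_mat n n" and comm: "\<And>e. A * \<rho> e = \<rho> e * (A :: 'k mat)"
  obtains c where "A = c \<cdot>\<^sub>m 1\<^sub>m n"
proof -
  have \<rho>c: "\<rho> e \<in> carrier_mat n n" for e using is_repD(1)[OF is_simple_repD(1)[OF \<rho>]] .
  obtain c v where v: "v \<in> carrier_vec n" "v \<noteq> 0\<^sub>v n" "A *\<^sub>v v = c \<cdot>\<^sub>v v"
    using alg_closed_eigenvector_exists[OF cl A is_simple_repD(2)[OF \<rho>]] by blast
  define W where "W = {u \<in> carrier_vec n. A *\<^sub>v u = c \<cdot>\<^sub>v u}"
  have "W = {0\<^sub>v n} \<or> W = carrier_vec n"
  proof (rule is_simple_rep_invariant_trivial[OF \<rho>])
    show "W \<subseteq> carrier_vec n" "0\<^sub>v n \<in> W" unfolding W_def using A by auto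
    show "u + w \<in> W" if "u \<in> W" "w \<in> W" for u w
      using that A unfolding W_def by (auto simp: mult_add_distrib_mat_vec smult_add_distrib_vec)
    show "t \<cdot>\<^sub>v u \<in> W" if "u \<in> W" for t u
      using that A unfolding W_def by (auto simp: mult_mat_vec smult_smult_assoc mult.commute)
    show "\<rho> e *\<^sub>v u \<in> W" if "u \<in> W" for e u
    proof -
      have u: "u \<in> carrier_vec n" "A *\<^sub>v u = c \<cdot>\<^sub>v u" using that W_def by auto
      have "A *\<^sub>v (\<rho> e *\<^sub>v u) = (A * \<rho> e) *\<^sub>v u"
        using assoc_mult_mat_vec[OF A \<rho>c u(1)] by simp
      also have "\<dots> = \<rho> e *\<^sub>v (A *\<^sub>v u)"
        using assoc_mult_mat_vec[OF \<rho>c A u(1)] by (simp add: comm)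
      finally show ?thesis
        using u mult_mat_vec[OF \<rho>c u(1)] mult_mat_vec_carrier[OF \<rho>c u(1)] unfolding W_def by simp
    qed
  qed
  hence "A *\<^sub>v u = c \<cdot>\<^sub>v u" if "u \<in> carrier_vec n" for u
    using v that unfolding W_def by auto
  hence "A = c \<cdot>\<^sub>m 1\<^sub>m n"
    by (intro eq_mat_on_vecI[OF A]) auto
  thus ?thesis using that by blast
qed

lemma intertwiner_kernel_trivial:
  assumes \<rho>: "is_simple_rep s n \<rho>" and \<sigma>: "is_rep s m \<sigma>" and T: "T \<in> carrier_mat m n"
    and int: "\<And>e. \<sigma> e * T = T * \<rho> e" and nz: "T \<noteq> 0\<^sub>m m n"
    and v: "v \<in> carrier_vec n" "T *\<^sub>v v = 0\<^sub>v m"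
  shows "v = 0\<^sub>v n"
proof -
  have \<rho>c: "\<rho> e \<in> carrier_mat n n" and \<sigma>c: "\<sigma> e \<in> carrier_mat m m" for e
    using is_repD(1)[OF is_simple_repD(1)[OF \<rho>]] is_repD(1)[OF \<sigma>] by auto
  define K where "K = {v \<in> carrier_vec n. T *\<^sub>v v = 0\<^sub>v m}"
  have "K = {0\<^sub>v n} \<or> K = carrier_vec n"
  proof (rule is_simple_rep_invariant_trivial[OF \<rho>])
    show "K \<subseteq> carrier_vec n" "0\<^sub>v n \<in> K" unfolding K_def using T by auto
    show "u + w \<in> K" if "u \<in> K" "w \<in> K" for u w
      using that T unfolding K_def by (simp add: mult_add_distrib_mat_vec)
    show "t \<cdot>\<^sub>v u \<in> K" if "u \<in> K" for t u
      using that T unfolding K_def by (auto simp: mult_mat_vec)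
    show "\<rho> e *\<^sub>v u \<in> K" if "u \<in> K" for e u
    proof -
      have u: "u \<in> carrier_vec n" "T *\<^sub>v u = 0\<^sub>v m" using that K_def by auto
      have "T *\<^sub>v (\<rho> e *\<^sub>v u) = (T * \<rho> e) *\<^sub>v u"
        using assoc_mult_mat_vec[OF T \<rho>c u(1)] by simp
      also have "\<dots> = \<sigma> e *\<^sub>v (T *\<^sub>v u)"
        using assoc_mult_mat_vec[OF \<sigma>c T u(1)] by (simp add: int[symmetric])
      finally show ?thesis using u \<sigma>c[of e] mult_mat_vec_carrier[OF \<rho>c u(1)] unfolding K_def by auto
    qed
  qed
  moreover have "K \<noteq> carrier_vec n"
  proof
    assume "K = carrier_vec n"
    hence "T *\<^sub>v v = 0\<^sub>v m" if "v \<in> carrier_vec n" for v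
      using that unfolding K_def by auto
    hence "T = 0\<^sub>m m n" by (intro eq_mat_on_vecI[OF T]) auto
    thus False using nz by simp
  qed
  ultimately show ?thesis using v unfolding K_def by auto
qed

lemma intertwiner_image_full:
  assumes \<sigma>: "is_simple_rep s m \<sigma>" and \<rho>: "is_rep s n \<rho>" and T: "T \<in> carrier_mat m n"
    and int: "\<And>e. \<sigma> e * T = T * \<rho> e" and nz: "T \<noteq> 0\<^sub>m m n"
    and u: "u \<in> carrier_vec m"
  shows "\<exists>v\<in>carrier_vec n. T *\<^sub>v v = u"
proof -
  have \<rho>c: "\<rho> e \<in> carrier_mat n n" and \<sigma>c: "\<sigma> e \<in> carrier_mat m m" for e
    using is_repD(1)[OF \<rho>] is_repD(1)[OF is_simple_repD(1)[OF \<sigma>]] by auto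
  define I where "I = (\<lambda>v. T *\<^sub>v v) ` carrier_vec n"
  have "I = {0\<^sub>v m} \<or> I = carrier_vec m"
  proof (rule is_simple_rep_invariant_trivial[OF \<sigma>])
    show "I \<subseteq> carrier_vec m" unfolding I_def using T by auto
    show "0\<^sub>v m \<in> I" unfolding I_def using T by (auto intro!: image_eqI[of _ _ "0\<^sub>v n"])
    show "u + w \<in> I" if uw: "u \<in> I" "w \<in> I" for u w
    proof -
      obtain u' w' where "u' \<in> carrier_vec n" "w' \<in> carrier_vec n" "u = T *\<^sub>v u'" "w = T *\<^sub>v w'"
        using uw I_def by auto
      thus ?thesis unfolding I_def using T
        by (auto simp: mult_add_distrib_mat_vec[symmetric] intro!: image_eqI[of _ _ "u' + w'"])
    qed
    show "t \<cdot>\<^sub>v u \<in> I" if u: "u \<in> I" for t u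
    proof -
      obtain u' where "u' \<in> carrier_vec n" "u = T *\<^sub>v u'" using u I_def by auto
      thus ?thesis unfolding I_def using T
        by (auto simp: mult_mat_vec[symmetric] intro!: image_eqI[of _ _ "t \<cdot>\<^sub>v u'"])
    qed
    show "\<sigma> e *\<^sub>v u \<in> I" if u: "u \<in> I" for e u
    proof -
      obtain v where v: "v \<in> carrier_vec n" "u = T *\<^sub>v v" using u I_def by auto
      have "\<sigma> e *\<^sub>v u = (\<sigma> e * T) *\<^sub>v v"
        using assoc_mult_mat_vec[OF \<sigma>c T v(1)] v(2) by simp
      also have "\<dots> = T *\<^sub>v (\<rho> e *\<^sub>v v)"
        using assoc_mult_mat_vec[OF T \<rho>c v(1)] by (simp add: int)
      finally show ?thesis unfolding I_def using mult_mat_vec_carrier[OF \<rho>c v(1)] by auto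
    qed
  qed
  moreover have "I \<noteq> {0\<^sub>v m}"
  proof
    assume "I = {0\<^sub>v m}"
    hence "T *\<^sub>v v = 0\<^sub>v m" if "v \<in> carrier_vec n" for v
      using that unfolding I_def by auto
    hence "T = 0\<^sub>m m n" by (intro eq_mat_on_vecI[OF T]) auto
    thus False using nz by simp
  qed
  ultimately have "u \<in> I" using u by simp
  thus ?thesis unfolding I_def by auto
qed

lemma schur_intertwiner_invertible:
  assumes \<sigma>: "is_simple_rep s m \<sigma>" and \<rho>: "is_simple_rep s n \<rho>" and T: "T \<in> carrier_mat m n"
    and int: "\<And>e. \<sigma> e * T = T * \<rho> e" and nz: "T \<noteq> 0\<^sub>m m n"
  shows "m = n" "invertible_mat (T :: 'k::field mat)"
proof -
  note inj = intertwiner_kernel_trivial[OF \<rho> is_simple_repD(1)[OF \<sigma>] T int nz]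
  have "n \<le> m" by (rule dim_le_if_mult_vec_inj[OF T inj])
  moreover have "m \<le> n"
    by (rule dim_le_if_mult_vec_surj[OF T intertwiner_image_full[OF \<sigma> is_simple_repD(1)[OF \<rho>] T int nz]])
  ultimately show "m = n" by simp
  with T inj show "invertible_mat T" by (intro invertible_mat_if_mult_vec_inj) auto
qed

lemma rep_iso_kernel:
  assumes iso: "rep_iso n \<sigma> m \<tau>" and \<sigma>: "is_rep s n \<sigma>" and a: "\<tau> a = 0\<^sub>m m m"
  shows "\<sigma> a = 0\<^sub>m n n"
proof -
  obtain P where P: "P \<in> carrier_mat n n" "invertible_mat P" "P * \<sigma> a = \<tau> a * P" and nm: "n = m"
    using iso unfolding rep_iso_def by blast
  note K = mat_inv_correct[OF P(1,2)]
  have "\<sigma> a = (mat_inv P * P) * \<sigma> a" using K is_repD(1)[OF \<sigma>, of a] by simp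
  also have "\<dots> = mat_inv P * (P * \<sigma> a)" by (rule assoc_mult_mat[OF K(1) P(1) is_repD(1)[OF \<sigma>]])
  also have "\<dots> = 0\<^sub>m n n" using P a K(1) by (simp add: nm)
  finally show ?thesis .
qed

locale k_algebra =
  fixes s :: "'k::field \<Rightarrow> 'e::ring_1 \<Rightarrow> 'e"
  assumes is_algebra: "is_algebra s"
begin

sublocale V: vector_space s
  using is_algebra unfolding is_algebra_def by simp

lemma scale_mult_left: "s c x * y = s c (x * y)"
  using is_algebra unfolding is_algebra_def by metis

lemma scale_mult_right: "x * s c y = s c (x * y)"
  using is_algebra unfolding is_algebra_def by metis

lemma linear_self_iff:
  "Vector_Spaces.linear s s f \<longleftrightarrow>
    (\<forall>x y. f (x + y) = f x + f y) \<and> (\<forall>c x. f (s c x) = s c (f x))"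
  using Vector_Spaces.linear_iff[of s s f] V.vector_space_axioms by simp

lemma is_rep_zero:
  assumes "is_rep s n \<rho>"
  shows "\<rho> 0 = 0\<^sub>m n n"
proof -
  have "\<rho> 0 = 0 \<cdot>\<^sub>m \<rho> 0" using is_repD(3)[OF assms, of 0 0] by simp
  also have "\<dots> = 0\<^sub>m n n" using is_repD(1)[OF assms, of 0] by auto
  finally show ?thesis .
qed

lemma is_rep_index_sum:
  assumes \<rho>: "is_rep s n \<rho>" and pq: "p < n" "q < n"
  shows "\<rho> (sum g A) $$ (p, q) = (\<Sum>i\<in>A. \<rho> (g i) $$ (p, q))"
proof -
  have "\<rho> (x + y) $$ (p, q) = \<rho> x $$ (p, q) + \<rho> y $$ (p, q)" for x y
    using is_repD(1,2)[OF \<rho>] pq by (metis carrier_matD(1,2) index_add_mat(1))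
  thus ?thesis
    using sum_comp_morphism[of "\<lambda>e. \<rho> e $$ (p, q)" g A] is_rep_zero[OF \<rho>] pq by (simp add: comp_def)
qed

lemma is_rep_trace_sum:
  assumes \<rho>: "is_rep s n \<rho>"
  shows "mat_trace (\<rho> (sum g A)) = (\<Sum>i\<in>A. mat_trace (\<rho> (g i)))"
proof -
  have "mat_trace (\<rho> (x + y)) = mat_trace (\<rho> x) + mat_trace (\<rho> y)" for x y
    using is_repD(2)[OF \<rho>] mat_trace_add[OF is_repD(1)[OF \<rho>] is_repD(1)[OF \<rho>]] by simp
  thus ?thesis
    using sum_comp_morphism[of "\<lambda>e. mat_trace (\<rho> e)" g A] is_rep_zero[OF \<rho>] by (simp add: comp_def)
qed

lemma intertwiner_subspace:
  assumes \<sigma>: "is_rep s m \<sigma>" and \<rho>: "is_rep s n \<rho>" and T: "T \<in> carrier_mat m n"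
  shows "V.subspace {e. \<sigma> e * T = T * \<rho> e}"
proof -
  have \<sigma>c: "\<sigma> e \<in> carrier_mat m m" and \<rho>c: "\<rho> e \<in> carrier_mat n n" for e
    using is_repD(1) \<sigma> \<rho> by auto
  show ?thesis
    unfolding V.subspace_def
  proof (intro conjI ballI allI; simp)
    show "\<sigma> 0 * T = T * \<rho> 0" using is_rep_zero[OF \<sigma>] is_rep_zero[OF \<rho>] T by simp
    fix u v assume "\<sigma> u * T = T * \<rho> u" "\<sigma> v * T = T * \<rho> v"
    thus "\<sigma> (u + v) * T = T * \<rho> (u + v)"
      using \<sigma>c[of u] \<sigma>c[of v] \<rho>c[of u] \<rho>c[of v] T
      by (simp add: is_repD(2)[OF \<sigma>] is_repD(2)[OF \<rho>] add_mult_distrib_mat mult_add_distrib_mat)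
  next
    fix c u assume "\<sigma> u * T = T * \<rho> u"
    thus "\<sigma> (s c u) * T = T * \<rho> (s c u)"
      using \<sigma>c[of u] \<rho>c[of u] T
      by (simp add: is_repD(3)[OF \<sigma>] is_repD(3)[OF \<rho>] mult_smult_assoc_mat mult_smult_distrib)
  qed
qed

lemma is_alg_auto_inv:
  assumes "is_alg_auto s f"
  shows "is_alg_auto s (inv_into UNIV f)"
proof -
  have f: "bij f" "\<And>x y. f (x * y) = f x * f y" "f 1 = 1"
    "\<And>x y. f (x + y) = f x + f y" "\<And>c x. f (s c x) = s c (f x)"
    using assms unfolding is_alg_auto_def linear_self_iff by auto
  define g where "g = inv_into UNIV f"
  have fg: "f (g e) = e" and gf: "g (f e) = e" for e
    unfolding g_def using f(1) by (simp_all add: bij_is_surj surj_f_inv_f bij_is_inj inv_into_f_f)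
  have "g (x * y) = g x * g y" "g (x + y) = g x + g y" "g (s c x) = s c (g x)" for x y c
    by (metis f(2) fg gf, metis f(4) fg gf, metis f(5) fg gf)
  moreover have "g 1 = 1" by (metis f(3) gf)
  moreover have "bij g" unfolding g_def by (rule bij_imp_bij_inv[OF f(1)])
  ultimately show ?thesis unfolding g_def[symmetric] is_alg_auto_def linear_self_iff by auto
qed

lemma is_simple_rep_comp_alg_auto:
  assumes f: "is_alg_auto s f" and \<rho>: "is_simple_rep s n \<rho>"
  shows "is_simple_rep s n (\<rho> \<circ> f)"
  unfolding is_simple_rep_def
proof (intro conjI allI impI)
  have "\<And>x y. f (x * y) = f x * f y" "f 1 = 1"
    "\<And>x y. f (x + y) = f x + f y" "\<And>c x. f (s c x) = s c (f x)"
    using f unfolding is_alg_auto_def linear_self_iff by auto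
  thus "is_rep s n (\<rho> \<circ> f)"
    using is_simple_repD(1)[OF \<rho>] unfolding is_rep_def by simp
  show "n > 0" using is_simple_repD(2)[OF \<rho>] .
  fix W assume W: "W \<subseteq> carrier_vec n" and cl: "0\<^sub>v n \<in> W \<and> (\<forall>v\<in>W. \<forall>u\<in>W. v + u \<in> W) \<and>
    (\<forall>c. \<forall>v\<in>W. c \<cdot>\<^sub>v v \<in> W) \<and> (\<forall>e. \<forall>v\<in>W. (\<rho> \<circ> f) e *\<^sub>v v \<in> W)"
  have "\<rho> e *\<^sub>v v \<in> W" if "v \<in> W" for e v
  proof -
    have "surj f" using f unfolding is_alg_auto_def by (simp add: bij_is_surj)
    then obtain e' where "e = f e'" by blast
    thus ?thesis using cl that by simp
  qed
  thus "W = {0\<^sub>v n} \<or> W = carrier_vec n"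
    using cl by (intro is_simple_rep_invariant_trivial[OF \<rho> W]) simp_all
qed

definition left_ideal :: "'e set \<Rightarrow> bool" where
  "left_ideal M \<longleftrightarrow> V.subspace M \<and> (\<forall>e m. m \<in> M \<longrightarrow> e * m \<in> M)"

definition minimal_left_ideal :: "'e set \<Rightarrow> bool" where
  "minimal_left_ideal M \<longleftrightarrow> left_ideal M \<and> M \<noteq> {0} \<and>
     (\<forall>M'. left_ideal M' \<longrightarrow> M' \<subseteq> M \<longrightarrow> M' = {0} \<or> M' = M)"

lemma left_ideal_mult: "left_ideal M \<Longrightarrow> m \<in> M \<Longrightarrow> e * m \<in> M"
  unfolding left_ideal_def by blast

lemma left_ideal_subspace: "left_ideal M \<Longrightarrow> V.subspace M"
  unfolding left_ideal_def by blast

lemma annihilator_left_ideal: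
  assumes K: "\<And>a e. a \<in> K \<Longrightarrow> a * e \<in> K"
  shows "left_ideal {v. \<forall>a\<in>K. a * v = 0}" (is "left_ideal ?A")
  unfolding left_ideal_def V.subspace_def
proof (intro conjI allI ballI impI)
  show "0 \<in> ?A" by simp
  show "x + y \<in> ?A" if "x \<in> ?A" "y \<in> ?A" for x y using that by (simp add: distrib_left)
  show "s c x \<in> ?A" if "x \<in> ?A" for c x using that by (simp add: scale_mult_right)
  show "e * m \<in> ?A" if "m \<in> ?A" for e m using that K by (simp add: mult.assoc[symmetric])
qed

text \<open>The matrix of \<open>m \<mapsto> e * m\<close> on a left ideal with coordinate map \<open>vec_comb s u\<close>.\<close>
definition left_mult_mat :: "(nat \<Rightarrow> 'e) \<Rightarrow> nat \<Rightarrow> 'e \<Rightarrow> 'k mat" where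
  "left_mult_mat u n e = mat n n (\<lambda>(p, q). inv_into (carrier_vec n) (vec_comb s u) (e * u q) $ p)"

lemma left_mult_mat_carrier: "left_mult_mat u n e \<in> carrier_mat n n"
  unfolding left_mult_mat_def by simp

context
  fixes M :: "'e set" and u :: "nat \<Rightarrow> 'e" and n :: nat
  assumes M: "left_ideal M" and u: "\<And>k. k < n \<Longrightarrow> u k \<in> M"
    and bij: "bij_betw (vec_comb s u) (carrier_vec n) M"
begin

lemma vec_comb_inj: "x \<in> carrier_vec n \<Longrightarrow> y \<in> carrier_vec n \<Longrightarrow> vec_comb s u x = vec_comb s u y \<Longrightarrow> x = y"
  using bij unfolding bij_betw_def inj_on_def by blast

lemma vec_comb_image: "vec_comb s u ` carrier_vec n = M"
  using bij unfolding bij_betw_def by blast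

lemma left_mult_mat_vec_comb:
  assumes x: "x \<in> carrier_vec n"
  shows "e * vec_comb s u x = vec_comb s u (left_mult_mat u n e *\<^sub>v x)"
proof -
  let ?lc = "vec_comb s u" and ?crd = "inv_into (carrier_vec n) (vec_comb s u)"
  have lc_sum: "?lc y = (\<Sum>k<n. s (y $ k) (u k))" if "y \<in> carrier_vec n" for y
    using that unfolding vec_comb_def by simp
  have eu: "e * u q = (\<Sum>p<n. s (left_mult_mat u n e $$ (p, q)) (u p))" if q: "q < n" for q
  proof -
    have eq: "e * u q \<in> M" using left_ideal_mult[OF M u[OF q]] .
    hence "e * u q = ?lc (?crd (e * u q))"
      using bij by (simp add: bij_betw_inv_into_right)
    also have "\<dots> = (\<Sum>p<n. s (left_mult_mat u n e $$ (p, q)) (u p))"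
      using inv_into_into[of "e * u q" ?lc "carrier_vec n"] eq q vec_comb_image
      by (simp add: lc_sum left_mult_mat_def)
    finally show ?thesis .
  qed
  have "e * ?lc x = (\<Sum>q<n. s (x $ q) (e * u q))"
    using x by (simp add: lc_sum sum_distrib_left scale_mult_right)
  also have "\<dots> = (\<Sum>q<n. \<Sum>p<n. s (left_mult_mat u n e $$ (p, q) * x $ q) (u p))"
    by (simp add: eu V.scale_sum_right mult.commute)
  also have "\<dots> = (\<Sum>p<n. s (\<Sum>q<n. left_mult_mat u n e $$ (p, q) * x $ q) (u p))"
    by (subst sum.swap) (simp add: V.scale_sum_left)
  also have "\<dots> = ?lc (left_mult_mat u n e *\<^sub>v x)"
    using x left_mult_mat_carrier[of u n e] by (simp add: lc_sum scalar_prod_def atLeast0LessThan)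
  finally show ?thesis .
qed

lemma left_mult_mat_is_rep: "is_rep s n (left_mult_mat u n)"
proof -
  let ?lc = "vec_comb s u" and ?\<sigma> = "left_mult_mat u n"
  note \<sigma>c = left_mult_mat_carrier and mult = left_mult_mat_vec_comb
  have mv: "?\<sigma> e *\<^sub>v x \<in> carrier_vec n" if "x \<in> carrier_vec n" for e x
    using mult_mat_vec_carrier[OF \<sigma>c that] .
  have eqI: "A = B" if A: "A \<in> carrier_mat n n" and B: "B \<in> carrier_mat n n"
    and eq: "\<And>v. v \<in> carrier_vec n \<Longrightarrow> ?lc (A *\<^sub>v v) = ?lc (B *\<^sub>v v)" for A B
    using vec_comb_inj eq A B by (intro eq_mat_on_vecI[OF A B]) (meson mult_mat_vec_carrier)
  show ?thesis
    unfolding is_rep_def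
  proof (intro conjI allI)
    show "?\<sigma> e \<in> carrier_mat n n" for e by (rule \<sigma>c)
    show "?\<sigma> (x + y) = ?\<sigma> x + ?\<sigma> y" for x y
    proof (rule eqI)
      fix v :: "'k vec" assume v: "v \<in> carrier_vec n"
      have "?lc (?\<sigma> (x + y) *\<^sub>v v) = x * ?lc v + y * ?lc v"
        using mult[OF v, symmetric] by (simp add: distrib_right)
      also have "\<dots> = ?lc ((?\<sigma> x + ?\<sigma> y) *\<^sub>v v)"
        using mult[OF v] V.vec_comb_add[OF mv[OF v] mv[OF v]] add_mult_distrib_mat_vec[OF \<sigma>c \<sigma>c v] by simp
      finally show "?lc (?\<sigma> (x + y) *\<^sub>v v) = ?lc ((?\<sigma> x + ?\<sigma> y) *\<^sub>v v)" .
    qed (use \<sigma>c in simp_all)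
    show "?\<sigma> (s c x) = c \<cdot>\<^sub>m ?\<sigma> x" for c x
    proof (rule eqI)
      fix v :: "'k vec" assume v: "v \<in> carrier_vec n"
      have "?lc (?\<sigma> (s c x) *\<^sub>v v) = s c (x * ?lc v)"
        using mult[OF v, symmetric] by (simp add: scale_mult_left)
      also have "\<dots> = ?lc ((c \<cdot>\<^sub>m ?\<sigma> x) *\<^sub>v v)"
        using mult[OF v] V.vec_comb_smult smult_mat_mult_vec[OF \<sigma>c v] by simp
      finally show "?lc (?\<sigma> (s c x) *\<^sub>v v) = ?lc ((c \<cdot>\<^sub>m ?\<sigma> x) *\<^sub>v v)" .
    qed (use \<sigma>c in simp_all)
    show "?\<sigma> (x * y) = ?\<sigma> x * ?\<sigma> y" for x y
    proof (rule eqI)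
      fix v :: "'k vec" assume v: "v \<in> carrier_vec n"
      have "?lc (?\<sigma> (x * y) *\<^sub>v v) = x * (y * ?lc v)"
        using mult[OF v, symmetric] by (simp add: mult.assoc)
      also have "\<dots> = ?lc ((?\<sigma> x * ?\<sigma> y) *\<^sub>v v)"
        using mult[OF v] mult[OF mv[OF v]] assoc_mult_mat_vec[OF \<sigma>c \<sigma>c v] by simp
      finally show "?lc (?\<sigma> (x * y) *\<^sub>v v) = ?lc ((?\<sigma> x * ?\<sigma> y) *\<^sub>v v)" .
    qed (use mult_carrier_mat[OF \<sigma>c \<sigma>c] \<sigma>c in auto)
    show "?\<sigma> 1 = 1\<^sub>m n"
      by (rule eqI) (use \<sigma>c mult[of _ 1] in auto)
  qed
qed

lemma left_mult_mat_invariant_image: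
  assumes W: "W \<subseteq> carrier_vec n" and cl: "0\<^sub>v n \<in> W" "\<And>v w. v \<in> W \<Longrightarrow> w \<in> W \<Longrightarrow> v + w \<in> W"
    "\<And>c v. v \<in> W \<Longrightarrow> c \<cdot>\<^sub>v v \<in> W" "\<And>e v. v \<in> W \<Longrightarrow> left_mult_mat u n e *\<^sub>v v \<in> W"
  shows "left_ideal (vec_comb s u ` W)"
  unfolding left_ideal_def V.subspace_def
proof (intro conjI allI ballI impI)
  let ?lc = "vec_comb s u"
  have Wc: "x \<in> carrier_vec n" if "x \<in> W" for x using subsetD[OF W that] .
  show "0 \<in> ?lc ` W" by (rule image_eqI[OF _ cl(1)]) (simp add: V.vec_comb_zero)
  fix x y assume "x \<in> ?lc ` W" "y \<in> ?lc ` W"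
  then obtain x' y' where x': "x' \<in> W" "x = ?lc x'" and y': "y' \<in> W" "y = ?lc y'" by blast
  have "x + y = ?lc (x' + y')" using V.vec_comb_add[OF Wc[OF x'(1)] Wc[OF y'(1)]] x' y' by simp
  thus "x + y \<in> ?lc ` W" using cl(2)[OF x'(1) y'(1)] by (rule image_eqI)
next
  let ?lc = "vec_comb s u"
  fix c x assume "x \<in> ?lc ` W"
  then obtain x' where x': "x' \<in> W" "x = ?lc x'" by blast
  have "s c x = ?lc (c \<cdot>\<^sub>v x')" using V.vec_comb_smult x' by simp
  thus "s c x \<in> ?lc ` W" using cl(3)[OF x'(1)] by (rule image_eqI)
next
  let ?lc = "vec_comb s u"
  fix e m assume "m \<in> ?lc ` W"
  then obtain x' where x': "x' \<in> W" "m = ?lc x'" by blast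
  have "e * m = ?lc (left_mult_mat u n e *\<^sub>v x')" using left_mult_mat_vec_comb subsetD[OF W x'(1)] x' by simp
  thus "e * m \<in> ?lc ` W" using cl(4)[OF x'(1)] by (rule image_eqI)
qed

lemma vec_comb_image_eq_zero:
  assumes W: "W \<subseteq> carrier_vec n" "0\<^sub>v n \<in> W" and W0: "vec_comb s u ` W = {0}"
  shows "W = {0\<^sub>v n}"
proof -
  have "x = 0\<^sub>v n" if x: "x \<in> W" for x
  proof (rule vec_comb_inj[OF subsetD[OF W(1) x] zero_carrier_vec])
    show "vec_comb s u x = vec_comb s u (0\<^sub>v n)" using W0 imageI[OF x, of "vec_comb s u"] V.vec_comb_zero by simp
  qed
  thus ?thesis using W(2) by blast
qed

lemma vec_comb_image_eq_ideal:
  assumes W: "W \<subseteq> carrier_vec n" and WM: "vec_comb s u ` W = M"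
  shows "W = carrier_vec n"
proof -
  have "y \<in> W" if y: "y \<in> carrier_vec n" for y
  proof -
    have "vec_comb s u y \<in> vec_comb s u ` W" unfolding WM vec_comb_image[symmetric] using y by (rule imageI)
    then obtain x where x: "x \<in> W" "vec_comb s u y = vec_comb s u x" by (rule imageE)
    have "x = y" by (rule vec_comb_inj[OF subsetD[OF W x(1)] y x(2)[symmetric]])
    thus ?thesis using x(1) by simp
  qed
  thus ?thesis using W by blast
qed

lemma left_mult_mat_simple:
  assumes minimal: "minimal_left_ideal M"
  shows "is_simple_rep s n (left_mult_mat u n)"
proof -
  let ?lc = "vec_comb s u" and ?\<sigma> = "left_mult_mat u n"
  have M0: "M \<noteq> {0}" and Mmin: "\<And>M'. left_ideal M' \<Longrightarrow> M' \<subseteq> M \<Longrightarrow> M' = {0} \<or> M' = M"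
    using minimal unfolding minimal_left_ideal_def by auto
  have npos: "n > 0"
  proof (rule ccontr)
    assume "\<not> n > 0"
    hence "x = 0\<^sub>v n" if "x \<in> carrier_vec n" for x using that by (intro eq_vecI) auto
    hence "m = 0" if "m \<in> M" for m
      using that vec_comb_image V.vec_comb_zero[of u n] by auto
    thus False using M0 V.subspace_0[OF left_ideal_subspace[OF M]] by auto
  qed
  have invariant_trivial: "W = {0\<^sub>v n} \<or> W = carrier_vec n"
    if W: "W \<subseteq> carrier_vec n" and cl: "0\<^sub>v n \<in> W" "\<And>v w. v \<in> W \<Longrightarrow> w \<in> W \<Longrightarrow> v + w \<in> W"
      "\<And>c v. v \<in> W \<Longrightarrow> c \<cdot>\<^sub>v v \<in> W" "\<And>e v. v \<in> W \<Longrightarrow> ?\<sigma> e *\<^sub>v v \<in> W" for W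
  proof -
    have "left_ideal (?lc ` W)" by (rule left_mult_mat_invariant_image[OF W cl])
    moreover have "?lc ` W \<subseteq> M" using image_mono[OF W, of ?lc] vec_comb_image by simp
    ultimately have "?lc ` W = {0} \<or> ?lc ` W = M" by (rule Mmin)
    thus ?thesis using vec_comb_image_eq_zero[OF W cl(1)] vec_comb_image_eq_ideal[OF W] by blast
  qed
  show ?thesis
    unfolding is_simple_rep_def
  proof (intro conjI left_mult_mat_is_rep npos allI impI)
    fix W assume "W \<subseteq> carrier_vec n" "0\<^sub>v n \<in> W \<and> (\<forall>v\<in>W. \<forall>w\<in>W. v + w \<in> W) \<and>
      (\<forall>c. \<forall>v\<in>W. c \<cdot>\<^sub>v v \<in> W) \<and> (\<forall>e. \<forall>v\<in>W. ?\<sigma> e *\<^sub>v v \<in> W)"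
    thus "W = {0\<^sub>v n} \<or> W = carrier_vec n" by (intro invariant_trivial) simp_all
  qed
qed

lemma left_mult_mat_annihilator:
  assumes a: "left_mult_mat u n a = 0\<^sub>m n n" and m: "m \<in> M"
  shows "a * m = 0"
proof -
  obtain x where x: "x \<in> carrier_vec n" "m = vec_comb s u x" using m vec_comb_image by auto
  have "0\<^sub>m n n *\<^sub>v x = 0\<^sub>v n" using x(1) by auto
  thus ?thesis using left_mult_mat_vec_comb[OF x(1), of a] a x(2) V.vec_comb_zero by simp
qed

end

end

section \<open>Twisted group algebras\<close>

lemma ring_inv_eqI:
  fixes a :: "'e::ring_1"
  assumes "a * a' = 1" "a' * a = 1"
  shows "ring_inv a = a'"
  unfolding ring_inv_def
proof (rule the_equality)
  fix y assume "a * y = 1 \<and> y * a = 1"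
  hence "y = (a' * a) * y" and "a' * (a * y) = a'" using assms by simp_all
  thus "y = a'" by (simp add: mult.assoc)
qed (use assms in simp)

locale twisted_group_algebra = k_algebra s
  for s :: "'k::field_char_0 \<Rightarrow> 'e::ring_1 \<Rightarrow> 'e" +
  fixes \<Gamma> :: "('g, 'h) monoid_scheme"
    and Eg :: "'g \<Rightarrow> 'e set"
    and b :: "'g \<Rightarrow> 'e"
  assumes group: "group \<Gamma>" and finite_carrier: "finite (carrier \<Gamma>)"
    and subspace_Eg: "\<forall>x\<in>carrier \<Gamma>. module.subspace s (Eg x)"
    and Eg_dim: "\<forall>x\<in>carrier \<Gamma>. vector_space.dim s (Eg x) = 1"
    and Eg_direct_sum: "\<forall>e. \<exists>!f. (\<forall>x\<in>carrier \<Gamma>. f x \<in> Eg x) \<and> (\<forall>x. x \<notin> carrier \<Gamma> \<longrightarrow> f x = 0)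
                          \<and> e = (\<Sum>x\<in>carrier \<Gamma>. f x)"
    and Eg_mult: "\<forall>x\<in>carrier \<Gamma>. \<forall>y\<in>carrier \<Gamma>.
                    {u * v | u v. u \<in> Eg x \<and> v \<in> Eg y} = Eg (x \<otimes>\<^bsub>\<Gamma>\<^esub> y)"
    and b_mem_nonzero: "\<forall>x\<in>carrier \<Gamma>. b x \<in> Eg x \<and> b x \<noteq> 0"
begin

abbreviation G where "G \<equiv> carrier \<Gamma>"

sublocale Gr: group \<Gamma> by (rule group)

lemma Eg_subspace: "x \<in> G \<Longrightarrow> V.subspace (Eg x)"
  using subspace_Eg by auto

lemma b_mem: "x \<in> G \<Longrightarrow> b x \<in> Eg x" and b_nonzero: "x \<in> G \<Longrightarrow> b x \<noteq> 0"
  using b_mem_nonzero by auto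

lemma Eg_eq_line: assumes x: "x \<in> G" shows "Eg x = range (\<lambda>c. s c (b x))"
proof -
  obtain B where B: "B \<subseteq> Eg x" "V.independent B" "Eg x \<subseteq> V.span B" "card B = V.dim (Eg x)"
    by (rule V.basis_exists)
  hence "card B = 1" using Eg_dim x by simp
  then obtain v where Bv: "B = {v}" by (auto simp: card_Suc_eq)
  have line: "Eg x \<subseteq> range (\<lambda>k. s k v)" using B(3) Bv V.span_singleton by simp
  then obtain c0 where c0: "b x = s c0 v" using b_mem[OF x] by auto
  have "c0 \<noteq> 0" using c0 b_nonzero[OF x] by auto
  hence "s k v = s (k / c0) (b x)" for k by (simp add: c0)
  hence "Eg x \<subseteq> range (\<lambda>c. s c (b x))" using line by (auto intro: range_eqI)
  moreover have "range (\<lambda>c. s c (b x)) \<subseteq> Eg x"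
    using Eg_subspace[OF x] b_mem[OF x] by (auto simp: V.subspace_def)
  ultimately show ?thesis by blast
qed

lemma Eg_mult_mem: "x \<in> G \<Longrightarrow> y \<in> G \<Longrightarrow> u \<in> Eg x \<Longrightarrow> v \<in> Eg y \<Longrightarrow> u * v \<in> Eg (x \<otimes>\<^bsub>\<Gamma>\<^esub> y)"
  using Eg_mult by blast

lemma zero_mem_Eg: "x \<in> G \<Longrightarrow> 0 \<in> Eg x"
  using Eg_subspace by (auto simp: V.subspace_def)

lemma scale_mem_Eg: "x \<in> G \<Longrightarrow> a \<in> Eg x \<Longrightarrow> s c a \<in> Eg x"
  using Eg_subspace by (auto simp: V.subspace_def)

lemma b_mult_nonzero: assumes x: "x \<in> G" and y: "y \<in> G" shows "b x * b y \<noteq> 0"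
proof
  assume 0: "b x * b y = 0"
  have "b (x \<otimes>\<^bsub>\<Gamma>\<^esub> y) \<in> {u * v | u v. u \<in> Eg x \<and> v \<in> Eg y}"
    using Eg_mult x y b_mem[of "x \<otimes>\<^bsub>\<Gamma>\<^esub> y"] by auto
  then obtain c d where "b (x \<otimes>\<^bsub>\<Gamma>\<^esub> y) = s c (b x) * s d (b y)"
    using Eg_eq_line x y by auto
  hence "b (x \<otimes>\<^bsub>\<Gamma>\<^esub> y) = 0" using 0 by (simp add: scale_mult_left scale_mult_right)
  thus False using b_nonzero x y by auto
qed

lemma b_mult_b:
  assumes x: "x \<in> G" and y: "y \<in> G"
  obtains c where "c \<noteq> 0" "b x * b y = s c (b (x \<otimes>\<^bsub>\<Gamma>\<^esub> y))"
proof -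
  have "b x * b y \<in> Eg (x \<otimes>\<^bsub>\<Gamma>\<^esub> y)" using Eg_mult_mem x y b_mem by auto
  then obtain c where c: "b x * b y = s c (b (x \<otimes>\<^bsub>\<Gamma>\<^esub> y))" using Eg_eq_line x y by auto
  hence "c \<noteq> 0" using b_mult_nonzero x y by auto
  thus ?thesis using c that by blast
qed

lemma Eg_decomp_unique:
  assumes f: "\<And>x. x \<in> G \<Longrightarrow> f x \<in> Eg x" and g: "\<And>x. x \<in> G \<Longrightarrow> g x \<in> Eg x"
    and eq: "(\<Sum>x\<in>G. f x) = (\<Sum>x\<in>G. g x)" and x: "x \<in> G"
  shows "f x = g x"
proof -
  define f' where "f' x = (if x \<in> G then f x else 0)" for x
  define g' where "g' x = (if x \<in> G then g x else 0)" for x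
  let ?P = "\<lambda>h. (\<forall>x\<in>G. h x \<in> Eg x) \<and> (\<forall>x. x \<notin> G \<longrightarrow> h x = 0) \<and> (\<Sum>x\<in>G. f x) = (\<Sum>x\<in>G. h x)"
  have "?P f'" using f by (auto simp: f'_def)
  moreover have "?P g'" using g eq by (auto simp: g'_def)
  ultimately have "f' = g'" using Eg_direct_sum by blast
  thus ?thesis using x by (metis f'_def g'_def)
qed

lemma Eg_decomp:
  obtains f where "\<And>x. x \<in> G \<Longrightarrow> f x \<in> Eg x" "e = (\<Sum>x\<in>G. f x)"
proof -
  from ex1_implies_ex[OF Eg_direct_sum[rule_format, of e]]
  obtain f where "\<forall>x\<in>G. f x \<in> Eg x" "e = (\<Sum>x\<in>G. f x)" by blast
  thus ?thesis using that by blast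
qed

lemma b_inj: "inj_on b G"
proof
  fix x y assume x: "x \<in> G" and y: "y \<in> G" and e: "b x = b y"
  show "x = y"
  proof (rule ccontr)
    assume xy: "x \<noteq> y"
    define f where "f z = (if z = x then b x else 0)" for z
    define g where "g z = (if z = y then b x else 0)" for z
    have "f x = g x"
    proof (rule Eg_decomp_unique[OF _ _ _ x])
      show "f z \<in> Eg z" if "z \<in> G" for z using that x b_mem zero_mem_Eg by (simp add: f_def)
      show "g z \<in> Eg z" if "z \<in> G" for z using that y b_mem zero_mem_Eg by (simp add: g_def e)
      show "sum f G = sum g G" using x y finite_carrier by (simp add: f_def g_def)
    qed
    thus False using xy b_nonzero x by (simp add: f_def g_def)
  qed
qed

definition b_basis :: "'e set" where "b_basis = b ` G"

lemma finite_b_basis: "finite b_basis"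
  unfolding b_basis_def using finite_carrier by simp

lemma independent_b_basis: "V.independent b_basis"
proof (rule V.independent_if_scalars_zero[OF finite_b_basis])
  fix f v assume sum0: "(\<Sum>x\<in>b_basis. s (f x) x) = 0" and v: "v \<in> b_basis"
  then obtain x where x: "x \<in> G" "v = b x" unfolding b_basis_def by auto
  have "(\<Sum>x\<in>G. s (f (b x)) (b x)) = (\<Sum>x\<in>G. 0)"
    using sum0 b_inj unfolding b_basis_def by (simp add: sum.reindex)
  hence "s (f (b x)) (b x) = 0"
    using Eg_decomp_unique[of "\<lambda>z. s (f (b z)) (b z)" "\<lambda>_. 0", OF _ _ _ x(1)]
    by (simp add: scale_mem_Eg b_mem zero_mem_Eg)
  thus "f v = 0" using x b_nonzero by simp
qed

lemma span_b_basis: "V.span b_basis = UNIV"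
proof -
  have "e \<in> V.span b_basis" for e
  proof -
    obtain f where f: "\<And>x. x \<in> G \<Longrightarrow> f x \<in> Eg x" "e = (\<Sum>x\<in>G. f x)" using Eg_decomp by blast
    have "f x \<in> V.span b_basis" if x: "x \<in> G" for x
    proof -
      obtain c where "f x = s c (b x)" using f(1)[OF x] Eg_eq_line[OF x] by auto
      moreover have "b x \<in> V.span b_basis" using x by (auto simp: b_basis_def intro!: V.span_base)
      ultimately show ?thesis by (simp add: V.span_scale)
    qed
    thus ?thesis using f(2) by (auto intro: V.span_sum)
  qed
  thus ?thesis by auto
qed

sublocale FD: finite_dimensional_vector_space s b_basis
  by unfold_locales (rule finite_b_basis, rule independent_b_basis, rule span_b_basis)

lemma basis_induct:
  assumes "V.subspace {e. P e}" and "\<And>x. x \<in> G \<Longrightarrow> P (b x)"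
  shows "P e"
proof -
  have "e \<in> V.span b_basis" using span_b_basis by simp
  thus ?thesis by (rule V.span_induct) (use assms in \<open>auto simp: b_basis_def\<close>)
qed

abbreviation coord where "coord \<equiv> V.representation b_basis"

lemma coord_add: "coord (u + v) z = coord u z + coord v z"
  using V.representation_add[OF independent_b_basis] span_b_basis by simp

lemma coord_scale: "coord (s c u) z = c * coord u z"
  using V.representation_scale[OF independent_b_basis] span_b_basis by simp

lemma coord_scale_b: "x \<in> G \<Longrightarrow> y \<in> G \<Longrightarrow> coord (s c (b x)) (b y) = (if y = x then c else 0)"
  using coord_scale V.representation_basis[OF independent_b_basis] b_inj
  by (auto simp: b_basis_def inj_on_def)

lemma one_mem_Eg_one: "1 \<in> Eg \<one>\<^bsub>\<Gamma>\<^esub>"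
proof -
  obtain f where f: "\<And>x. x \<in> G \<Longrightarrow> f x \<in> Eg x" "1 = sum f G" using Eg_decomp by blast
  let ?one = "\<one>\<^bsub>\<Gamma>\<^esub>"
  txt \<open>Multiplying \<open>1 = \<Sum> f\<close> by \<open>b \<one>\<close> and comparing components kills every \<open>f x\<close> with \<open>x \<noteq> \<one>\<close>.\<close>
  have fz: "f x = 0" if x: "x \<in> G" "x \<noteq> ?one" for x
  proof -
    have "(\<lambda>z. f z * b ?one) x = (\<lambda>z. if z = ?one then b ?one else 0) x"
    proof (rule Eg_decomp_unique[OF _ _ _ x(1)])
      show "f z * b ?one \<in> Eg z" if z: "z \<in> G" for z
        using Eg_mult_mem[OF z Gr.one_closed f(1)[OF z] b_mem] z by simp
      show "(if z = ?one then b ?one else 0) \<in> Eg z" if z: "z \<in> G" for z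
        using b_mem zero_mem_Eg z by auto
      have "(\<Sum>z\<in>G. f z * b ?one) = b ?one" by (simp add: sum_distrib_right[symmetric] f(2)[symmetric])
      thus "(\<Sum>z\<in>G. f z * b ?one) = (\<Sum>z\<in>G. if z = ?one then b ?one else 0)"
        using finite_carrier by simp
    qed
    hence "f x * b ?one = 0" using x by simp
    moreover obtain c where "f x = s c (b x)" using f(1)[OF x(1)] Eg_eq_line[OF x(1)] by auto
    ultimately show ?thesis using b_mult_nonzero[OF x(1) Gr.one_closed] by (simp add: scale_mult_left)
  qed
  have "sum f G = f ?one"
    using fz finite_carrier by (subst sum.remove[of _ ?one]) (auto intro!: sum.neutral)
  thus ?thesis using f(1)[OF Gr.one_closed] f(2) by simp
qed

text \<open>The coefficient of \<open>1\<close> in the graded decomposition (\<open>1 \<in> Eg \<one>\<close> is a multiple of \<open>b \<one>\<close>).\<close>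
definition tau :: "'e \<Rightarrow> 'k" where
  "tau e = coord e (b \<one>\<^bsub>\<Gamma>\<^esub>) / coord 1 (b \<one>\<^bsub>\<Gamma>\<^esub>)"

lemma one_eq_scale_b_one:
  obtains c where "c \<noteq> 0" "1 = s c (b \<one>\<^bsub>\<Gamma>\<^esub>)" "coord 1 (b \<one>\<^bsub>\<Gamma>\<^esub>) = c"
proof -
  obtain c where c: "1 = s c (b \<one>\<^bsub>\<Gamma>\<^esub>)" using one_mem_Eg_one Eg_eq_line[OF Gr.one_closed] by auto
  hence "c \<noteq> 0" by (metis V.scale_zero_left zero_neq_one)
  moreover have "coord 1 (b \<one>\<^bsub>\<Gamma>\<^esub>) = c" by (subst c) (simp add: coord_scale_b)
  ultimately show ?thesis using that c by blast
qed

lemma tau_add: "tau (u + v) = tau u + tau v"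
  unfolding tau_def by (simp add: coord_add add_divide_distrib)

lemma tau_scale: "tau (s c u) = c * tau u"
  unfolding tau_def by (simp add: coord_scale)

lemma tau_zero: "tau 0 = 0"
  using tau_scale[of 0 0] by simp

lemma tau_sum: "tau (sum f A) = (\<Sum>i\<in>A. tau (f i))"
  using sum_comp_morphism[of tau f A] tau_zero tau_add by (simp add: comp_def)

lemma tau_one: "tau 1 = 1"
  by (rule one_eq_scale_b_one) (simp add: tau_def)

lemma tau_Eg_zero: assumes x: "x \<in> G" "x \<noteq> \<one>\<^bsub>\<Gamma>\<^esub>" and a: "a \<in> Eg x" shows "tau a = 0"
proof -
  obtain c where "a = s c (b x)" using a Eg_eq_line[OF x(1)] by auto
  thus ?thesis unfolding tau_def using x by (simp add: coord_scale_b)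
qed

lemma Eg_one_eq_scale_one: assumes a: "a \<in> Eg \<one>\<^bsub>\<Gamma>\<^esub>" shows "a = s (tau a) 1"
proof -
  obtain c where c: "a = s c (b \<one>\<^bsub>\<Gamma>\<^esub>)" using a Eg_eq_line[OF Gr.one_closed] by auto
  obtain c1 where c1: "c1 \<noteq> 0" "1 = s c1 (b \<one>\<^bsub>\<Gamma>\<^esub>)" "coord 1 (b \<one>\<^bsub>\<Gamma>\<^esub>) = c1"
    by (rule one_eq_scale_b_one)
  have "tau a = c / c1" unfolding tau_def using c c1 by (simp add: coord_scale_b)
  hence "s (tau a) 1 = s (c / c1) (s c1 (b \<one>\<^bsub>\<Gamma>\<^esub>))" using c1(2) by simp
  thus ?thesis using c c1(1) by simp
qed

definition nz_homogeneous :: "'e \<Rightarrow> 'g \<Rightarrow> bool" where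
  "nz_homogeneous a x \<longleftrightarrow> x \<in> G \<and> a \<in> Eg x \<and> a \<noteq> 0"

lemma nz_homogeneous_b: "x \<in> G \<Longrightarrow> nz_homogeneous (b x) x"
  using b_mem b_nonzero unfolding nz_homogeneous_def by auto

lemma b_invertible:
  assumes x: "x \<in> G"
  obtains r where "r \<in> Eg (inv\<^bsub>\<Gamma>\<^esub> x)" "b x * r = 1" "r * b x = 1"
proof -
  define y where "y = inv\<^bsub>\<Gamma>\<^esub> x"
  have y: "y \<in> G" using x by (simp add: y_def)
  have "b x * b y \<in> Eg \<one>\<^bsub>\<Gamma>\<^esub>" "b y * b x \<in> Eg \<one>\<^bsub>\<Gamma>\<^esub>"
    using Eg_mult_mem[OF x y b_mem[OF x] b_mem[OF y]] Eg_mult_mem[OF y x b_mem[OF y] b_mem[OF x]] x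
    by (simp_all add: y_def)
  hence p: "b x * b y = s (tau (b x * b y)) 1" and q: "b y * b x = s (tau (b y * b x)) 1"
    by (simp_all add: Eg_one_eq_scale_one[symmetric])
  have tp: "tau (b x * b y) \<noteq> 0" and tq: "tau (b y * b x) \<noteq> 0"
    using p q b_mult_nonzero[OF x y] b_mult_nonzero[OF y x] by (metis V.scale_zero_left)+
  define r where "r = s (1 / tau (b x * b y)) (b y)"
  define l where "l = s (1 / tau (b y * b x)) (b y)"
  have xr: "b x * r = 1"
    unfolding r_def scale_mult_right by (subst p) (simp add: tp)
  have lx: "l * b x = 1"
    unfolding l_def scale_mult_left by (subst q) (simp add: tq)
  have "l = l * (b x * r)" using xr by simp
  also have "\<dots> = r" using lx by (simp add: mult.assoc[symmetric])
  finally have "l = r" .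
  moreover have "r \<in> Eg y" unfolding r_def by (rule scale_mem_Eg[OF y b_mem[OF y]])
  ultimately show ?thesis using xr lx that y_def by blast
qed

lemma nz_homogeneous_ring_inv:
  assumes a: "nz_homogeneous a x"
  shows "a * ring_inv a = 1" "ring_inv a * a = 1" "nz_homogeneous (ring_inv a) (inv\<^bsub>\<Gamma>\<^esub> x)"
proof -
  have x: "x \<in> G" using a nz_homogeneous_def by simp
  obtain c where c: "c \<noteq> 0" "a = s c (b x)"
    using a Eg_eq_line[OF x] unfolding nz_homogeneous_def by fastforce
  obtain r where r: "r \<in> Eg (inv\<^bsub>\<Gamma>\<^esub> x)" "b x * r = 1" "r * b x = 1" using b_invertible[OF x] by blast
  define a' where "a' = s (1 / c) r"
  have 1: "a * a' = 1" and 2: "a' * a = 1"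
    using c r by (simp_all add: a'_def scale_mult_left scale_mult_right)
  have ri: "ring_inv a = a'" by (rule ring_inv_eqI[OF 1 2])
  show "a * ring_inv a = 1" "ring_inv a * a = 1" using 1 2 ri by simp_all
  have "a' \<noteq> 0" using 1 by auto
  moreover have "a' \<in> Eg (inv\<^bsub>\<Gamma>\<^esub> x)" unfolding a'_def using r x by (intro scale_mem_Eg) auto
  ultimately show "nz_homogeneous (ring_inv a) (inv\<^bsub>\<Gamma>\<^esub> x)" unfolding nz_homogeneous_def using ri x by simp
qed

lemma ring_inv_b:
  assumes x: "x \<in> G"
  shows "b x * ring_inv (b x) = 1" "ring_inv (b x) * b x = 1" "ring_inv (b x) \<in> Eg (inv\<^bsub>\<Gamma>\<^esub> x)"
  using nz_homogeneous_ring_inv[OF nz_homogeneous_b[OF x]] unfolding nz_homogeneous_def by auto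

lemma ring_inv_scale:
  assumes a: "nz_homogeneous a x" and c: "c \<noteq> 0"
  shows "ring_inv (s c a) = s (inverse c) (ring_inv a)"
  by (rule ring_inv_eqI)
    (use nz_homogeneous_ring_inv[OF a] c in \<open>simp_all add: scale_mult_left scale_mult_right\<close>)

lemma ring_inv_mult:
  assumes a: "nz_homogeneous a x" and a': "nz_homogeneous a' y"
  shows "ring_inv (a * a') = ring_inv a' * ring_inv a"
proof (rule ring_inv_eqI)
  note inv = nz_homogeneous_ring_inv(1,2)[OF a] nz_homogeneous_ring_inv(1,2)[OF a']
  have "a * a' * (ring_inv a' * ring_inv a) = a * (a' * ring_inv a') * ring_inv a" by (simp add: mult.assoc)
  thus "a * a' * (ring_inv a' * ring_inv a) = 1" using inv by simp
  have "ring_inv a' * ring_inv a * (a * a') = ring_inv a' * (ring_inv a * a) * a'" by (simp add: mult.assoc)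
  thus "ring_inv a' * ring_inv a * (a * a') = 1" using inv by simp
qed

lemma ring_inv_b_mult_b_cancel:
  assumes x: "x \<in> G" and y: "y \<in> G"
  shows "ring_inv (b y * b x) * b y = ring_inv (b x)"
  using ring_inv_mult[OF nz_homogeneous_b[OF y] nz_homogeneous_b[OF x]] ring_inv_b(2)[OF y]
  by (simp add: mult.assoc)

lemma bij_betw_mult_left: "y \<in> G \<Longrightarrow> bij_betw (\<lambda>x. y \<otimes>\<^bsub>\<Gamma>\<^esub> x) G G"
  by (rule bij_betw_byWitness[where f' = "\<lambda>x. inv\<^bsub>\<Gamma>\<^esub> y \<otimes>\<^bsub>\<Gamma>\<^esub> x"])
    (auto simp: Gr.m_assoc[symmetric])

text \<open>\<open>b y * b x\<close> is a nonzero multiple of \<open>b (y x)\<close>, so a summand that is invariant under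
  rescaling its two arguments inversely can be reindexed along \<open>x \<mapsto> y x\<close>.\<close>
lemma sum_translate_left:
  fixes F :: "'e \<Rightarrow> 'e \<Rightarrow> 'a::comm_monoid_add"
  assumes F: "\<And>c u u'. c \<noteq> 0 \<Longrightarrow> F (s c u) (s (inverse c) u') = F u u'" and y: "y \<in> G"
  shows "(\<Sum>x\<in>G. F (b y * b x) (ring_inv (b y * b x))) = (\<Sum>x\<in>G. F (b x) (ring_inv (b x)))"
proof -
  have "F (b y * b x) (ring_inv (b y * b x)) = F (b (y \<otimes>\<^bsub>\<Gamma>\<^esub> x)) (ring_inv (b (y \<otimes>\<^bsub>\<Gamma>\<^esub> x)))"
    if x: "x \<in> G" for x
  proof -
    obtain c where c: "c \<noteq> 0" "b y * b x = s c (b (y \<otimes>\<^bsub>\<Gamma>\<^esub> x))" using b_mult_b[OF y x] by blast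
    thus ?thesis using ring_inv_scale[OF nz_homogeneous_b c(1), of "y \<otimes>\<^bsub>\<Gamma>\<^esub> x"] y x F by simp
  qed
  hence "(\<Sum>x\<in>G. F (b y * b x) (ring_inv (b y * b x)))
      = (\<Sum>x\<in>G. (\<lambda>z. F (b z) (ring_inv (b z))) (y \<otimes>\<^bsub>\<Gamma>\<^esub> x))"
    by (intro sum.cong) auto
  also have "\<dots> = (\<Sum>z\<in>G. F (b z) (ring_inv (b z)))"
    by (rule sum.reindex_bij_betw[OF bij_betw_mult_left[OF y]])
  finally show ?thesis .
qed

lemma expansion_subspace:
  assumes add: "\<And>x u v. \<phi> x (u + v) = \<phi> x u + \<phi> x v" and scale: "\<And>x c u. \<phi> x (s c u) = c * \<phi> x u"
  shows "V.subspace {e. e = (\<Sum>x\<in>G. s (\<phi> x e) (u x))}"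
proof -
  have "v + w = (\<Sum>x\<in>G. s (\<phi> x (v + w)) (u x))"
    if "v = (\<Sum>x\<in>G. s (\<phi> x v) (u x))" "w = (\<Sum>x\<in>G. s (\<phi> x w) (u x))" for v w
    by (subst that(1), subst that(2)) (simp add: add sum.distrib V.scale_left_distrib)
  moreover have "s c v = (\<Sum>x\<in>G. s (\<phi> x (s c v)) (u x))" if "v = (\<Sum>x\<in>G. s (\<phi> x v) (u x))" for v c
    by (subst that) (simp add: scale V.scale_sum_right)
  moreover have "\<phi> x 0 = 0" for x using scale[of x 0 0] by simp
  ultimately show ?thesis unfolding V.subspace_def by auto
qed

text \<open>The bases \<open>b x\<close> and \<open>ring_inv (b x)\<close> are dual to each other for the bilinear form
  \<open>tau (u * v)\<close>.\<close>
lemma dual_basis_expansion: "e = (\<Sum>x\<in>G. s (tau (e * b x)) (ring_inv (b x)))"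
proof (rule basis_induct[where P = "\<lambda>e. e = (\<Sum>x\<in>G. s (tau (e * b x)) (ring_inv (b x)))"])
  show "V.subspace {e. e = (\<Sum>x\<in>G. s (tau (e * b x)) (ring_inv (b x)))}"
    by (rule expansion_subspace) (simp_all add: tau_add tau_scale distrib_right scale_mult_left)
  fix y assume y: "y \<in> G"
  let ?iy = "inv\<^bsub>\<Gamma>\<^esub> y"
  have iy: "?iy \<in> G" using y by simp
  have "tau (b y * b x) = 0" if x: "x \<in> G" "x \<noteq> ?iy" for x
  proof (rule tau_Eg_zero)
    show "y \<otimes>\<^bsub>\<Gamma>\<^esub> x \<in> G" using x y by simp
    show "y \<otimes>\<^bsub>\<Gamma>\<^esub> x \<noteq> \<one>\<^bsub>\<Gamma>\<^esub>" using x y by (metis Gr.inv_equality Gr.r_inv)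
    show "b y * b x \<in> Eg (y \<otimes>\<^bsub>\<Gamma>\<^esub> x)" using Eg_mult_mem[OF y x(1) b_mem[OF y] b_mem[OF x(1)]] .
  qed
  hence "(\<Sum>x\<in>G. s (tau (b y * b x)) (ring_inv (b x))) = s (tau (b y * b ?iy)) (ring_inv (b ?iy))"
    using iy finite_carrier by (subst sum.remove[of _ ?iy]) (auto intro!: sum.neutral)
  also have "\<dots> = b y"
  proof -
    have "b y * b ?iy \<in> Eg \<one>\<^bsub>\<Gamma>\<^esub>" using Eg_mult_mem[OF y iy b_mem[OF y] b_mem[OF iy]] y by simp
    hence "b y * b ?iy = s (tau (b y * b ?iy)) 1" by (rule Eg_one_eq_scale_one)
    hence "b y = s (tau (b y * b ?iy)) 1 * ring_inv (b ?iy)"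
      using ring_inv_b(1)[OF iy] by (metis mult.assoc mult_1_right)
    thus ?thesis by (simp add: scale_mult_left)
  qed
  finally show "b y = (\<Sum>x\<in>G. s (tau (b y * b x)) (ring_inv (b x)))" by simp
qed

lemma basis_expansion: "e = (\<Sum>x\<in>G. s (tau (e * ring_inv (b x))) (b x))"
proof (rule basis_induct[where P = "\<lambda>e. e = (\<Sum>x\<in>G. s (tau (e * ring_inv (b x))) (b x))"])
  show "V.subspace {e. e = (\<Sum>x\<in>G. s (tau (e * ring_inv (b x))) (b x))}"
    by (rule expansion_subspace) (simp_all add: tau_add tau_scale distrib_right scale_mult_left)
  fix y assume y: "y \<in> G"
  have "tau (b y * ring_inv (b x)) = 0" if x: "x \<in> G" "x \<noteq> y" for x
  proof (rule tau_Eg_zero)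
    show "y \<otimes>\<^bsub>\<Gamma>\<^esub> inv\<^bsub>\<Gamma>\<^esub> x \<in> G" using x y by simp
    show "y \<otimes>\<^bsub>\<Gamma>\<^esub> inv\<^bsub>\<Gamma>\<^esub> x \<noteq> \<one>\<^bsub>\<Gamma>\<^esub>"
      using x y by (metis Gr.inv_closed Gr.inv_equality Gr.inv_inv)
    show "b y * ring_inv (b x) \<in> Eg (y \<otimes>\<^bsub>\<Gamma>\<^esub> inv\<^bsub>\<Gamma>\<^esub> x)"
      using Eg_mult_mem[OF y _ b_mem[OF y] ring_inv_b(3)[OF x(1)]] x(1) by simp
  qed
  hence "(\<Sum>x\<in>G. s (tau (b y * ring_inv (b x))) (b x)) = s (tau (b y * ring_inv (b y))) (b y)"
    using y finite_carrier by (subst sum.remove[of _ y]) (auto intro!: sum.neutral)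
  also have "\<dots> = b y" using ring_inv_b(1)[OF y] by (simp add: tau_one)
  finally show "b y = (\<Sum>x\<in>G. s (tau (b y * ring_inv (b x))) (b x))" by simp
qed

lemma lin_trace_eq_sum_tau:
  assumes "Vector_Spaces.linear s s f"
  shows "lin_trace s UNIV f = (\<Sum>x\<in>G. tau (f (b x) * ring_inv (b x)))"
proof (rule FD.lin_trace_dual_frame[OF finite_carrier])
  show "f (v + w) = f v + f w" "f (s c v) = s c (f v)" for c v w
    using assms unfolding linear_self_iff by simp_all
  show "tau ((v + w) * ring_inv (b x)) = tau (v * ring_inv (b x)) + tau (w * ring_inv (b x))"
    "tau (s c v * ring_inv (b x)) = c * tau (v * ring_inv (b x))" for x c v w
    by (simp_all add: tau_add tau_scale distrib_right scale_mult_left)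
qed (rule basis_expansion)

end

context twisted_group_algebra
begin

lemma of_nat_card_carrier_nonzero: "(of_nat (card G) :: 'k) \<noteq> 0"
  using finite_carrier Gr.one_closed by (auto simp: card_gt_0_iff)

definition average :: "nat \<Rightarrow> nat \<Rightarrow> ('e \<Rightarrow> 'k mat) \<Rightarrow> ('e \<Rightarrow> 'k mat) \<Rightarrow> 'k mat \<Rightarrow> 'k mat" where
  "average m n \<sigma> \<rho> X = mat_sum m n (\<lambda>x. \<sigma> (b x) * X * \<rho> (ring_inv (b x))) G"

lemma average_carrier [simp]: "average m n \<sigma> \<rho> X \<in> carrier_mat m n"
  unfolding average_def by simp

lemma average_translate:
  assumes \<sigma>: "is_rep s m \<sigma>" and \<rho>: "is_rep s n \<rho>" and X: "X \<in> carrier_mat m n" and y: "y \<in> G"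
  shows "mat_sum m n (\<lambda>x. \<sigma> (b y * b x) * X * \<rho> (ring_inv (b y * b x))) G = average m n \<sigma> \<rho> X"
proof (rule eq_matI)
  have \<sigma>c: "\<sigma> e \<in> carrier_mat m m" and \<rho>c: "\<rho> e \<in> carrier_mat n n" for e
    using is_repD(1) \<sigma> \<rho> by auto
  fix p q assume "p < dim_row (average m n \<sigma> \<rho> X)" "q < dim_col (average m n \<sigma> \<rho> X)"
  hence p: "p < m" and q: "q < n" by (simp_all add: average_def)
  have "(\<sigma> (s c u) * X * \<rho> (s (inverse c) u')) $$ (p, q) = (\<sigma> u * X * \<rho> u') $$ (p, q)"
    if "c \<noteq> 0" for c u u'
    using that carrier_matD[OF mult_carrier_mat[OF mult_carrier_mat[OF \<sigma>c X] \<rho>c]] p q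
      smult_mult_mult_smult[OF \<sigma>c X \<rho>c]
    by (simp add: is_repD(3)[OF \<sigma>] is_repD(3)[OF \<rho>])
  thus "mat_sum m n (\<lambda>x. \<sigma> (b y * b x) * X * \<rho> (ring_inv (b y * b x))) G $$ (p, q)
      = average m n \<sigma> \<rho> X $$ (p, q)"
    using sum_translate_left[OF _ y, of "\<lambda>u u'. (\<sigma> u * X * \<rho> u') $$ (p, q)"] p q
    by (simp add: average_def)
qed (simp_all add: average_def)

lemma average_intertwines:
  assumes \<sigma>: "is_rep s m \<sigma>" and \<rho>: "is_rep s n \<rho>" and X: "X \<in> carrier_mat m n"
  shows "\<sigma> e * average m n \<sigma> \<rho> X = average m n \<sigma> \<rho> X * \<rho> e"
proof (rule basis_induct[where P = "\<lambda>e. \<sigma> e * average m n \<sigma> \<rho> X = average m n \<sigma> \<rho> X * \<rho> e"])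
  show "V.subspace {e. \<sigma> e * average m n \<sigma> \<rho> X = average m n \<sigma> \<rho> X * \<rho> e}"
    by (rule intertwiner_subspace[OF \<sigma> \<rho> average_carrier])
  have \<sigma>c: "\<sigma> e \<in> carrier_mat m m" and \<rho>c: "\<rho> e \<in> carrier_mat n n" for e
    using is_repD(1) \<sigma> \<rho> by auto
  fix y assume y: "y \<in> G"
  let ?F = "\<lambda>x. \<sigma> (b y * b x) * X * \<rho> (ring_inv (b y * b x))"
  have step: "\<sigma> (b y) * (\<sigma> (b x) * X * \<rho> (ring_inv (b x))) = ?F x * \<rho> (b y)" if x: "x \<in> G" for x
  proof -
    have "\<sigma> (b y) * (\<sigma> (b x) * X * \<rho> (ring_inv (b x))) = \<sigma> (b y) * \<sigma> (b x) * X * \<rho> (ring_inv (b x))"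
      using assoc_mult_mat[OF \<sigma>c mult_carrier_mat[OF \<sigma>c X] \<rho>c] assoc_mult_mat[OF \<sigma>c \<sigma>c X] by simp
    also have "\<dots> = \<sigma> (b y * b x) * X * (\<rho> (ring_inv (b y * b x)) * \<rho> (b y))"
      by (simp add: is_repD(4)[OF \<sigma>] is_repD(4)[OF \<rho>, symmetric] ring_inv_b_mult_b_cancel[OF x y])
    also have "\<dots> = ?F x * \<rho> (b y)"
      using assoc_mult_mat[OF mult_carrier_mat[OF \<sigma>c X] \<rho>c \<rho>c] by simp
    finally show ?thesis .
  qed
  have "\<sigma> (b y) * average m n \<sigma> \<rho> X = mat_sum m n (\<lambda>x. \<sigma> (b y) * (\<sigma> (b x) * X * \<rho> (ring_inv (b x)))) G"
    unfolding average_def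
    by (rule mult_mat_sum[OF \<sigma>c]) (rule mult_carrier_mat[OF mult_carrier_mat[OF \<sigma>c X] \<rho>c])
  also have "\<dots> = mat_sum m n (\<lambda>x. ?F x * \<rho> (b y)) G"
    by (rule mat_sum_cong) (rule step)
  also have "\<dots> = mat_sum m n ?F G * \<rho> (b y)"
    by (rule mat_sum_mult[symmetric, OF \<rho>c]) (rule mult_carrier_mat[OF mult_carrier_mat[OF \<sigma>c X] \<rho>c])
  finally show "\<sigma> (b y) * average m n \<sigma> \<rho> X = average m n \<sigma> \<rho> X * \<rho> (b y)"
    using average_translate[OF \<sigma> \<rho> X y] by simp
qed

lemma mat_trace_average_self:
  assumes \<rho>: "is_rep s n \<rho>" and Z: "Z \<in> carrier_mat n n"
  shows "mat_trace (average n n \<rho> \<rho> Z) = of_nat (card G) * mat_trace Z"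
proof -
  have \<rho>c: "\<rho> e \<in> carrier_mat n n" for e using is_repD(1)[OF \<rho>] .
  have "mat_trace (\<rho> (b x) * Z * \<rho> (ring_inv (b x))) = mat_trace Z" if x: "x \<in> G" for x
  proof (rule mat_trace_conj[OF \<rho>c \<rho>c Z])
    show "\<rho> (ring_inv (b x)) * \<rho> (b x) = 1\<^sub>m n"
      using ring_inv_b(2)[OF x] is_repD(4,5)[OF \<rho>] by metis
  qed
  moreover have "\<rho> (b x) * Z * \<rho> (ring_inv (b x)) \<in> carrier_mat n n" for x
    using \<rho>c Z by (meson mult_carrier_mat)
  ultimately show ?thesis unfolding average_def by (simp add: mat_trace_mat_sum)
qed

lemma mat_trace_mult_average:
  assumes \<sigma>: "is_rep s n \<sigma>" and \<rho>: "is_rep s n \<rho>" and A: "A \<in> carrier_mat n n" and X: "X \<in> carrier_mat n n"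
  shows "mat_trace (A * average n n \<sigma> \<rho> X) = (\<Sum>x\<in>G. mat_trace (A * (\<sigma> (b x) * X * \<rho> (ring_inv (b x)))))"
proof -
  have summand: "\<sigma> (b x) * X * \<rho> (ring_inv (b x)) \<in> carrier_mat n n" for x
    using mult_carrier_mat[OF mult_carrier_mat[OF is_repD(1)[OF \<sigma>] X] is_repD(1)[OF \<rho>]] .
  have "A * average n n \<sigma> \<rho> X = mat_sum n n (\<lambda>x. A * (\<sigma> (b x) * X * \<rho> (ring_inv (b x)))) G"
    unfolding average_def by (rule mult_mat_sum[OF A summand])
  also have "mat_trace \<dots> = (\<Sum>x\<in>G. mat_trace (A * (\<sigma> (b x) * X * \<rho> (ring_inv (b x)))))"
    by (rule mat_trace_mat_sum) (rule mult_carrier_mat[OF A summand])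
  finally show ?thesis .
qed

lemma average_eq_zero_if_not_iso:
  assumes \<sigma>: "is_simple_rep s m \<sigma>" and \<rho>: "is_simple_rep s n \<rho>" and X: "X \<in> carrier_mat m n"
    and not_iso: "\<not> rep_iso n \<rho> m \<sigma>"
  shows "average m n \<sigma> \<rho> X = 0\<^sub>m m n"
proof (rule ccontr)
  let ?T = "average m n \<sigma> \<rho> X"
  assume nz: "?T \<noteq> 0\<^sub>m m n"
  note int = average_intertwines[OF is_simple_repD(1)[OF \<sigma>] is_simple_repD(1)[OF \<rho>] X]
  have "m = n" "invertible_mat ?T"
    using schur_intertwiner_invertible[OF \<sigma> \<rho> average_carrier int nz] by simp_all
  hence "rep_iso n \<rho> m \<sigma>" unfolding rep_iso_def using int[symmetric] average_carrier by metis
  thus False using not_iso by contradiction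
qed

lemma average_self:
  assumes cl: "alg_closed_field TYPE('k)" and \<rho>: "is_simple_rep s n \<rho>" and X: "X \<in> carrier_mat n n"
  shows "average n n \<rho> \<rho> X = (of_nat (card G) / of_nat n * mat_trace X) \<cdot>\<^sub>m 1\<^sub>m n"
proof -
  note int = average_intertwines[OF is_simple_repD(1)[OF \<rho>] is_simple_repD(1)[OF \<rho>] X]
  obtain c where c: "average n n \<rho> \<rho> X = c \<cdot>\<^sub>m 1\<^sub>m n"
    using schur_scalar[OF cl \<rho> average_carrier] int by metis
  have "c * of_nat n = of_nat (card G) * mat_trace X"
    using mat_trace_average_self[OF is_simple_repD(1)[OF \<rho>] X] c
    by (simp add: mat_trace_smult[OF one_carrier_mat])
  moreover have "n > 0" using is_simple_repD(2)[OF \<rho>] .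
  ultimately have "c = of_nat (card G) / of_nat n * mat_trace X" by (simp add: field_simps)
  thus ?thesis using c by simp
qed

lemma minimal_left_ideal_exists:
  assumes C: "left_ideal C" "C \<noteq> {0}"
  obtains M where "minimal_left_ideal M" "M \<subseteq> C"
proof -
  let ?P = "\<lambda>M. left_ideal M \<and> M \<subseteq> C \<and> M \<noteq> {0}"
  have "?P C" using C by simp
  then obtain M where M: "?P M" and least: "\<And>M'. ?P M' \<Longrightarrow> V.dim M \<le> V.dim M'"
    using ex_has_least_nat[of ?P C V.dim] by blast
  have "M' = {0} \<or> M' = M" if M': "left_ideal M'" "M' \<subseteq> M" for M'
  proof (cases "M' = {0}")
    case False
    hence "V.dim M \<le> V.dim M'" using M M' least by auto
    thus ?thesis using FD.subspace_dim_equal[of M' M] M' M left_ideal_subspace by simp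
  qed simp
  thus ?thesis using M that unfolding minimal_left_ideal_def by blast
qed

lemma minimal_left_ideal_simple_rep:
  assumes M: "minimal_left_ideal M"
  obtains n \<sigma> where "is_simple_rep s n \<sigma>" "\<forall>a. \<sigma> a = 0\<^sub>m n n \<longrightarrow> (\<forall>m\<in>M. a * m = 0)"
proof -
  have Mi: "left_ideal M" using M unfolding minimal_left_ideal_def by simp
  obtain n u where u: "\<And>k. k < n \<Longrightarrow> u k \<in> M" and bij: "bij_betw (vec_comb s u) (carrier_vec n) M"
    using FD.subspace_coordinates[OF left_ideal_subspace[OF Mi]] by blast
  show ?thesis
  proof (rule that[OF left_mult_mat_simple[OF Mi u bij M]])
    show "\<forall>a. left_mult_mat u n a = 0\<^sub>m n n \<longrightarrow> (\<forall>m\<in>M. a * m = 0)"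
      using left_mult_mat_annihilator[OF Mi u bij] by blast
  qed
qed

text \<open>Maschke's averaging trick; it needs \<open>card G\<close> to be invertible in the field.\<close>
lemma left_ideal_module_projection:
  assumes A: "left_ideal A"
  obtains P where "\<And>u v. P (u + v) = P u + P v" "\<And>c v. P (s c v) = s c (P v)"
    "\<And>e v. P (e * v) = e * P v" "\<And>v. P v \<in> A" "\<And>v. v \<in> A \<Longrightarrow> P v = v"
proof -
  obtain p where p: "Vector_Spaces.linear s s p" and pA: "\<And>v. p v \<in> A" and p_id: "\<And>v. v \<in> A \<Longrightarrow> p v = v"
    using V.exists_linear_projection[OF left_ideal_subspace[OF A]] by blast
  have padd: "p (x + y) = p x + p y" and pscale: "p (s c x) = s c (p x)" for x y c
    using p unfolding linear_self_iff by auto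
  define N where "N = (of_nat (card G) :: 'k)"
  define P where "P v = s (1 / N) (\<Sum>x\<in>G. b x * p (ring_inv (b x) * v))" for v
  have Padd: "P (u + v) = P u + P v" for u v
    unfolding P_def by (simp add: distrib_left padd sum.distrib V.scale_right_distrib)
  have Pscale: "P (s c u) = s c (P u)" for c u
    unfolding P_def by (simp add: scale_mult_right pscale V.scale_sum_right mult.commute)
  have Pmult: "P (e * v) = e * P v" for e v
  proof (rule basis_induct[where P = "\<lambda>e. \<forall>v. P (e * v) = e * P v", rule_format])
    have "P 0 = 0" using Pscale[of 0 0] by simp
    thus "V.subspace {e. \<forall>v. P (e * v) = e * P v}" unfolding V.subspace_def
      by (auto simp: distrib_right Padd scale_mult_left Pscale)
    fix y v assume y: "y \<in> G"
    have "(\<Sum>x\<in>G. b y * b x * p (ring_inv (b x) * v))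
        = (\<Sum>x\<in>G. (b y * b x) * p (ring_inv (b y * b x) * (b y * v)))"
      using ring_inv_b_mult_b_cancel[OF _ y] by (intro sum.cong) (simp_all add: mult.assoc[symmetric])
    also have "\<dots> = (\<Sum>x\<in>G. b x * p (ring_inv (b x) * (b y * v)))"
      by (rule sum_translate_left[OF _ y])
        (simp add: scale_mult_left scale_mult_right pscale)
    finally show "P (b y * v) = b y * P v"
      unfolding P_def by (simp add: scale_mult_right sum_distrib_left mult.assoc)
  qed
  have "P v \<in> A" for v
    unfolding P_def using A pA
    by (auto intro!: V.subspace_scale V.subspace_sum left_ideal_subspace left_ideal_mult)
  moreover have "P v = v" if v: "v \<in> A" for v
  proof -
    have "b x * p (ring_inv (b x) * v) = v" if x: "x \<in> G" for x
      using p_id[OF left_ideal_mult[OF A v]] ring_inv_b(1)[OF x] by (simp add: mult.assoc[symmetric])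
    hence "(\<Sum>x\<in>G. b x * p (ring_inv (b x) * v)) = (\<Sum>x\<in>G. s 1 v)" by simp
    also have "\<dots> = s N v" unfolding N_def by (simp only: V.scale_sum_left[symmetric]) simp
    finally have "P v = s (1 / N) (s N v)" unfolding P_def by simp
    thus ?thesis using of_nat_card_carrier_nonzero unfolding N_def by simp
  qed
  ultimately show ?thesis using that[OF Padd Pscale Pmult] by blast
qed

lemma left_ideal_complement:
  assumes A: "left_ideal A"
  obtains C where "left_ideal C" "A \<inter> C = {0}" "\<forall>v. \<exists>a\<in>A. \<exists>c\<in>C. v = a + c"
proof -
  obtain P where Padd: "\<And>u v. P (u + v) = P u + P v" and Pscale: "\<And>c v. P (s c v) = s c (P v)"
    and Pmult: "\<And>e v. P (e * v) = e * P v" and PA: "\<And>v. P v \<in> A" and Pid: "\<And>v. v \<in> A \<Longrightarrow> P v = v"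
    using left_ideal_module_projection[OF A] by blast
  define C where "C = {v. P v = 0}"
  have "P 0 = 0" using Pscale[of 0 0] by simp
  hence "left_ideal C" unfolding left_ideal_def V.subspace_def C_def by (auto simp: Padd Pscale Pmult)
  moreover have "A \<inter> C = {0}"
    using Pid \<open>P 0 = 0\<close> V.subspace_0[OF left_ideal_subspace[OF A]] unfolding C_def by auto
  moreover have "v = P v + (v - P v) \<and> P (v - P v) = 0" for v
    using Padd[of "v - P v" "P v"] Pid[OF PA] by simp
  hence "\<exists>a\<in>A. \<exists>c\<in>C. v = a + c" for v using PA unfolding C_def by blast
  ultimately show ?thesis using that by blast
qed

end

context twisted_group_algebra
begin

lemma average_comp_inv_auto_stable:
  assumes cl: "alg_closed_field TYPE('k)" and \<iota>: "is_alg_auto s \<iota>" and \<rho>: "is_simple_rep s n \<rho>"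
    and J: "J \<in> carrier_mat n n" "invertible_mat J" "\<And>e. J * \<rho> e = \<rho> (\<iota> e) * J"
    and X: "X \<in> carrier_mat n n"
  shows "average n n (\<rho> \<circ> inv_into UNIV \<iota>) \<rho> X
    = (of_nat (card G) / of_nat n * mat_trace (J * X)) \<cdot>\<^sub>m mat_inv J"
proof -
  let ?\<sigma> = "\<rho> \<circ> inv_into UNIV \<iota>"
  let ?c = "of_nat (card G) / of_nat n * mat_trace (J * X)"
  have \<rho>c: "\<rho> e \<in> carrier_mat n n" for e using is_repD(1)[OF is_simple_repD(1)[OF \<rho>]] .
  have "surj \<iota>" using \<iota> unfolding is_alg_auto_def by (simp add: bij_is_surj)
  hence J\<sigma>: "J * \<rho> (inv_into UNIV \<iota> e) = \<rho> e * J" for e using J(3)[of "inv_into UNIV \<iota> e"] by (simp add: surj_f_inv_f)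
  have JT: "J * average n n ?\<sigma> \<rho> X = ?c \<cdot>\<^sub>m 1\<^sub>m n"
  proof -
    have "J * (?\<sigma> (b x) * X * \<rho> (ring_inv (b x))) = \<rho> (b x) * (J * X) * \<rho> (ring_inv (b x))" for x
    proof -
      have "J * (?\<sigma> (b x) * X * \<rho> (ring_inv (b x))) = J * ?\<sigma> (b x) * X * \<rho> (ring_inv (b x))"
        using assoc_mult_mat[OF J(1) mult_carrier_mat[OF \<rho>c X] \<rho>c] assoc_mult_mat[OF J(1) \<rho>c X]
        by simp
      also have "\<dots> = \<rho> (b x) * (J * X) * \<rho> (ring_inv (b x))"
        using assoc_mult_mat[OF \<rho>c J(1) X] by (simp add: J\<sigma>)
      finally show ?thesis .
    qed
    moreover have "J * average n n ?\<sigma> \<rho> X = mat_sum n n (\<lambda>x. J * (?\<sigma> (b x) * X * \<rho> (ring_inv (b x)))) G"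
      unfolding average_def by (rule mult_mat_sum[OF J(1)]) (simp add: mult_carrier_mat[OF mult_carrier_mat[OF \<rho>c X] \<rho>c])
    ultimately have "J * average n n ?\<sigma> \<rho> X = average n n \<rho> \<rho> (J * X)"
      unfolding average_def by simp
    also have "\<dots> = ?c \<cdot>\<^sub>m 1\<^sub>m n" using average_self[OF cl \<rho>] J(1) X by simp
    finally show ?thesis .
  qed
  have "average n n ?\<sigma> \<rho> X = (mat_inv J * J) * average n n ?\<sigma> \<rho> X"
    using mat_inv_correct[OF J(1,2)] left_mult_one_mat[OF average_carrier] by simp
  also have "\<dots> = mat_inv J * (?c \<cdot>\<^sub>m 1\<^sub>m n)"
    using assoc_mult_mat[OF mat_inv_correct(1)[OF J(1,2)] J(1) average_carrier] by (simp add: JT)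
  also have "\<dots> = ?c \<cdot>\<^sub>m mat_inv J"
    using mult_smult_distrib[OF mat_inv_correct(1)[OF J(1,2)] one_carrier_mat]
      right_mult_one_mat[OF mat_inv_correct(1)[OF J(1,2)]] by simp
  finally show ?thesis .
qed

lemma average_comp_inv_auto_unstable:
  assumes \<iota>: "is_alg_auto s \<iota>" and \<rho>: "is_simple_rep s n \<rho>" and X: "X \<in> carrier_mat n n"
    and unstable: "\<not> (\<exists>K\<in>carrier_mat n n. invertible_mat K \<and> (\<forall>e. K * \<rho> e = \<rho> (\<iota> e) * K))"
  shows "average n n (\<rho> \<circ> inv_into UNIV \<iota>) \<rho> X = 0\<^sub>m n n"
proof (rule average_eq_zero_if_not_iso[OF is_simple_rep_comp_alg_auto[OF is_alg_auto_inv[OF \<iota>] \<rho>] \<rho> X])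
  show "\<not> rep_iso n \<rho> n (\<rho> \<circ> inv_into UNIV \<iota>)"
  proof
    assume "rep_iso n \<rho> n (\<rho> \<circ> inv_into UNIV \<iota>)"
    then obtain P where P: "P \<in> carrier_mat n n" "invertible_mat P"
      and int: "\<And>e. P * \<rho> e = \<rho> (inv_into UNIV \<iota> e) * P"
      unfolding rep_iso_def by auto
    have "inv_into UNIV \<iota> (\<iota> e) = e" for e
      using \<iota> unfolding is_alg_auto_def by (simp add: bij_is_inj)
    hence "P * \<rho> (\<iota> e) = \<rho> e * P" for e using int[of "\<iota> e"] by simp
    hence "mat_inv P * \<rho> e = \<rho> (\<iota> e) * mat_inv P" for e
      using is_repD(1)[OF is_simple_repD(1)[OF \<rho>]] by (intro mat_inv_intertwines[OF P]) auto
    thus False using unstable mat_inv_correct(1)[OF P] invertible_mat_mat_inv[OF P] by blast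
  qed
qed

end

section \<open>Simple modules and the trace formula\<close>

locale twisted_group_algebra_simples = twisted_group_algebra s \<Gamma> Eg b
  for s :: "'k::field_char_0 \<Rightarrow> 'e::ring_1 \<Rightarrow> 'e" and \<Gamma> :: "('g, 'h) monoid_scheme" and Eg b +
  fixes r' :: nat and d :: "nat \<Rightarrow> nat" and \<rho> :: "nat \<Rightarrow> 'e \<Rightarrow> 'k mat"
  assumes alg_closed: "alg_closed_field TYPE('k)"
    and simple: "\<forall>i\<in>{1..r'}. is_simple_rep s (d i) (\<rho> i)"
    and distinct: "\<forall>i\<in>{1..r'}. \<forall>j\<in>{1..r'}. rep_iso (d i) (\<rho> i) (d j) (\<rho> j) \<longrightarrow> i = j"
    and complete: "\<forall>n \<sigma>. is_simple_rep s n \<sigma> \<longrightarrow> (\<exists>i\<in>{1..r'}. rep_iso n \<sigma> (d i) (\<rho> i))"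
begin

lemma rho_simple: "i \<in> {1..r'} \<Longrightarrow> is_simple_rep s (d i) (\<rho> i)"
  using simple by blast

lemma rho_rep: "i \<in> {1..r'} \<Longrightarrow> is_rep s (d i) (\<rho> i)"
  using is_simple_repD(1)[OF rho_simple] .

lemma rho_carrier: "i \<in> {1..r'} \<Longrightarrow> \<rho> i e \<in> carrier_mat (d i) (d i)"
  using is_repD(1)[OF rho_rep] .

text \<open>The annihilator of the common kernel is a left ideal; by Maschke it has a complement, and a
  minimal left ideal inside that complement would be a simple module killed by the kernel, hence
  inside the annihilator. So the annihilator is everything and contains \<open>1\<close>.\<close>
lemma common_kernel_eq_zero:
  assumes a: "\<And>j. j \<in> {1..r'} \<Longrightarrow> \<rho> j a = 0\<^sub>m (d j) (d j)"
  shows "a = 0"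
proof -
  define K where "K = {a. \<forall>j\<in>{1..r'}. \<rho> j a = 0\<^sub>m (d j) (d j)}"
  have K_mult: "a' * e \<in> K" if "a' \<in> K" for a' e
    using that left_mult_zero_mat[OF rho_carrier] by (auto simp: K_def is_repD(4)[OF rho_rep])
  define A where "A = {v. \<forall>a'\<in>K. a' * v = 0}"
  have "left_ideal A" unfolding A_def by (rule annihilator_left_ideal[OF K_mult])
  then obtain C where C: "left_ideal C" "A \<inter> C = {0}" "\<forall>v. \<exists>a\<in>A. \<exists>c\<in>C. v = a + c"
    by (rule left_ideal_complement)
  have "C = {0}"
  proof (rule ccontr)
    assume "C \<noteq> {0}"
    then obtain M where M: "minimal_left_ideal M" "M \<subseteq> C"
      using minimal_left_ideal_exists[OF C(1)] by blast
    obtain n \<sigma> where \<sigma>: "is_simple_rep s n \<sigma>" and ann: "\<forall>a. \<sigma> a = 0\<^sub>m n n \<longrightarrow> (\<forall>m\<in>M. a * m = 0)"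
      by (rule minimal_left_ideal_simple_rep[OF M(1)])
    obtain j where j: "j \<in> {1..r'}" and iso: "rep_iso n \<sigma> (d j) (\<rho> j)"
      using complete \<sigma> by blast
    have "M \<subseteq> A"
    proof
      fix m assume m: "m \<in> M"
      have "a' * m = 0" if "a' \<in> K" for a'
        using ann rep_iso_kernel[OF iso is_simple_repD(1)[OF \<sigma>]] that j m unfolding K_def by simp
      thus "m \<in> A" unfolding A_def by simp
    qed
    hence "M \<subseteq> {0}" using M(2) C(2) by auto
    moreover have "0 \<in> M" "M \<noteq> {0}"
      using M(1) V.subspace_0 unfolding minimal_left_ideal_def left_ideal_def by auto
    ultimately show False by auto
  qed
  hence "1 \<in> A" using spec[OF C(3), of 1] by auto
  moreover have "a \<in> K" using a unfolding K_def by blast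
  ultimately have "a * 1 = 0" unfolding A_def by blast
  thus ?thesis by simp
qed

lemma average_rho:
  assumes i: "i \<in> {1..r'}" and j: "j \<in> {1..r'}" and X: "X \<in> carrier_mat (d j) (d i)"
  shows "average (d j) (d i) (\<rho> j) (\<rho> i) X =
    (if i = j then (of_nat (card G) / of_nat (d i) * mat_trace X) \<cdot>\<^sub>m 1\<^sub>m (d i) else 0\<^sub>m (d j) (d i))"
proof (cases "i = j")
  case True
  thus ?thesis using average_self[OF alg_closed rho_simple[OF i]] X by simp
next
  case False
  hence "\<not> rep_iso (d i) (\<rho> i) (d j) (\<rho> j)" using distinct i j by blast
  thus ?thesis using average_eq_zero_if_not_iso[OF rho_simple[OF j] rho_simple[OF i] X] False by simp
qed

definition central_idempotent :: "nat \<Rightarrow> 'e" where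
  "central_idempotent i =
    (\<Sum>x\<in>G. s (of_nat (d i) / of_nat (card G) * mat_trace (\<rho> i (ring_inv (b x)))) (b x))"

lemma rho_central_idempotent:
  assumes i: "i \<in> {1..r'}" and j: "j \<in> {1..r'}"
  shows "\<rho> j (central_idempotent i) = (if i = j then 1\<^sub>m (d j) else 0\<^sub>m (d j) (d j))"
proof (rule eq_matI)
  fix p q assume "p < dim_row (if i = j then 1\<^sub>m (d j) else 0\<^sub>m (d j) (d j))"
    "q < dim_col (if i = j then 1\<^sub>m (d j) else 0\<^sub>m (d j) (d j))"
  hence p: "p < d j" and q: "q < d j" by (auto split: if_splits)
  define c where "c = of_nat (d i) / (of_nat (card G) :: 'k)"
  let ?avg = "\<lambda>t. average (d j) (d i) (\<rho> j) (\<rho> i) (mat_unit (d j) (d i) q t)"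
  have "\<rho> j (central_idempotent i) $$ (p, q)
      = (\<Sum>x\<in>G. c * mat_trace (\<rho> i (ring_inv (b x))) * \<rho> j (b x) $$ (p, q))"
    unfolding central_idempotent_def c_def using carrier_matD[OF rho_carrier[OF j]] p q
    by (simp add: is_rep_index_sum[OF rho_rep[OF j] p q] is_repD(3)[OF rho_rep[OF j]])
  also have "\<dots> = c * (\<Sum>t<d i. \<Sum>x\<in>G. \<rho> j (b x) $$ (p, q) * \<rho> i (ring_inv (b x)) $$ (t, t))"
    using carrier_matD(1)[OF rho_carrier[OF i]]
    by (simp add: mat_trace_def sum_distrib_left sum_distrib_right sum.swap[of _ G] ac_simps)
  also have "\<dots> = c * (\<Sum>t<d i. ?avg t $$ (p, t))"
    using index_mult_mat_unit_mult[OF rho_carrier[OF j] rho_carrier[OF i] q _ p] p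
    by (intro arg_cong[where f = "(*) c"] sum.cong) (simp_all add: average_def)
  also have "\<dots> = (if i = j \<and> p = q then 1 else 0)"
  proof (cases "i = j")
    case False
    thus ?thesis using average_rho[OF i j mat_unit_carrier] p by simp
  next
    case True
    have "(\<Sum>t<d i. ?avg t $$ (p, t))
        = (\<Sum>t<d i. if t = q then (if p = q then of_nat (card G) / of_nat (d i) else 0) else 0)"
      using average_rho[OF i j mat_unit_carrier] True p q by (intro sum.cong) (auto simp: mat_trace_mat_unit)
    also have "\<dots> = (if p = q then of_nat (card G) / of_nat (d i) else 0)" using q True by simp
    finally show ?thesis
      using True of_nat_card_carrier_nonzero is_simple_repD(2)[OF rho_simple[OF i]] by (simp add: c_def)
  qed
  finally show "\<rho> j (central_idempotent i) $$ (p, q) = (if i = j then 1\<^sub>m (d j) else 0\<^sub>m (d j) (d j)) $$ (p, q)"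
    using p q by simp
qed (use rho_carrier[OF j] in auto)

lemma sum_central_idempotents: "(\<Sum>i\<in>{1..r'}. central_idempotent i) = 1"
proof -
  define u where "u = 1 - (\<Sum>i\<in>{1..r'}. central_idempotent i)"
  have "\<rho> j u = 0\<^sub>m (d j) (d j)" if j: "j \<in> {1..r'}" for j
  proof (rule eq_matI)
    fix p q assume "p < dim_row (0\<^sub>m (d j) (d j) :: 'k mat)" "q < dim_col (0\<^sub>m (d j) (d j) :: 'k mat)"
    hence p: "p < d j" and q: "q < d j" by auto
    have "\<rho> j 1 = \<rho> j u + \<rho> j (\<Sum>i\<in>{1..r'}. central_idempotent i)"
      unfolding u_def by (simp add: is_repD(2)[OF rho_rep[OF j], symmetric])
    hence "\<rho> j 1 $$ (p, q) = \<rho> j u $$ (p, q) + (\<Sum>i\<in>{1..r'}. \<rho> j (central_idempotent i) $$ (p, q))"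
      using carrier_matD[OF rho_carrier[OF j]] p q by (simp add: is_rep_index_sum[OF rho_rep[OF j] p q])
    also have "(\<Sum>i\<in>{1..r'}. \<rho> j (central_idempotent i) $$ (p, q)) = (if p = q then 1 else 0)"
      using rho_central_idempotent[OF _ j] j p q by (simp add: if_distrib[of "\<lambda>A. A $$ (p, q)"] cong: if_cong)
    finally show "\<rho> j u $$ (p, q) = 0\<^sub>m (d j) (d j) $$ (p, q)"
      using is_repD(5)[OF rho_rep[OF j]] p q by simp
  qed (use rho_carrier[OF j] in auto)
  hence "u = 0" by (rule common_kernel_eq_zero)
  thus ?thesis unfolding u_def by simp
qed

lemma tau_eq_sum_traces: "tau e = (\<Sum>i\<in>{1..r'}. of_nat (d i) / of_nat (card G) * mat_trace (\<rho> i e))"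
proof -
  have "tau (e * central_idempotent i) = of_nat (d i) / of_nat (card G) * mat_trace (\<rho> i e)"
    if i: "i \<in> {1..r'}" for i
  proof -
    have "mat_trace (\<rho> i e) = mat_trace (\<rho> i (\<Sum>x\<in>G. s (tau (e * b x)) (ring_inv (b x))))"
      by (rule arg_cong[where f = "\<lambda>e. mat_trace (\<rho> i e)", OF dual_basis_expansion])
    also have "\<dots> = (\<Sum>x\<in>G. tau (e * b x) * mat_trace (\<rho> i (ring_inv (b x))))"
      using mat_trace_smult[OF rho_carrier[OF i]]
      by (simp add: is_rep_trace_sum[OF rho_rep[OF i]] is_repD(3)[OF rho_rep[OF i]])
    finally show ?thesis
      unfolding central_idempotent_def
      by (simp add: sum_distrib_left scale_mult_right tau_sum tau_scale ac_simps)
  qed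
  moreover have "tau e = tau (e * (\<Sum>i\<in>{1..r'}. central_idempotent i))"
    unfolding sum_central_idempotents by simp
  ultimately show ?thesis by (simp add: sum_distrib_left tau_sum)
qed

end

context twisted_group_algebra_simples
begin

lemma lin_trace_twisted_mult:
  assumes \<iota>: "is_alg_auto s \<iota>"
  shows "lin_trace s UNIV (\<lambda>e. u * inv_into UNIV \<iota> e * v) =
    (\<Sum>i\<in>{1..r'}. of_nat (d i) / of_nat (card G) *
       mat_trace (\<rho> i u * average (d i) (d i) (\<rho> i \<circ> inv_into UNIV \<iota>) (\<rho> i) (\<rho> i v)))"
proof -
  let ?\<iota>' = "inv_into UNIV \<iota>"
  let ?c = "\<lambda>i. of_nat (d i) / (of_nat (card G) :: 'k)"
  have "Vector_Spaces.linear s s ?\<iota>'" using is_alg_auto_inv[OF \<iota>] unfolding is_alg_auto_def by simp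
  hence "Vector_Spaces.linear s s (\<lambda>e. u * ?\<iota>' e * v)"
    unfolding linear_self_iff by (simp add: distrib_left distrib_right scale_mult_left scale_mult_right)
  hence "lin_trace s UNIV (\<lambda>e. u * ?\<iota>' e * v) = (\<Sum>x\<in>G. tau (u * ?\<iota>' (b x) * v * ring_inv (b x)))"
    by (rule lin_trace_eq_sum_tau)
  also have "\<dots> = (\<Sum>x\<in>G. \<Sum>i\<in>{1..r'}. ?c i * mat_trace (\<rho> i (u * ?\<iota>' (b x) * v * ring_inv (b x))))"
    by (simp add: tau_eq_sum_traces)
  also have "\<dots> = (\<Sum>i\<in>{1..r'}. \<Sum>x\<in>G. ?c i *
      mat_trace (\<rho> i u * (\<rho> i (?\<iota>' (b x)) * \<rho> i v * \<rho> i (ring_inv (b x)))))"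
  proof -
    have "\<rho> i (u * ?\<iota>' (b x) * v * ring_inv (b x)) = \<rho> i u * (\<rho> i (?\<iota>' (b x)) * \<rho> i v * \<rho> i (ring_inv (b x)))"
      if i: "i \<in> {1..r'}" for i x
      using assoc_mult_mat[OF rho_carrier[OF i] rho_carrier[OF i] rho_carrier[OF i]]
        assoc_mult_mat[OF rho_carrier[OF i] mult_carrier_mat[OF rho_carrier[OF i] rho_carrier[OF i]] rho_carrier[OF i]]
      by (simp add: is_repD(4)[OF rho_rep[OF i]])
    thus ?thesis by (subst sum.swap) (intro sum.cong refl, simp)
  qed
  also have "\<dots> = (\<Sum>i\<in>{1..r'}. ?c i *
      mat_trace (\<rho> i u * average (d i) (d i) (\<rho> i \<circ> ?\<iota>') (\<rho> i) (\<rho> i v)))"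
  proof (intro sum.cong refl)
    fix i assume i: "i \<in> {1..r'}"
    have "is_rep s (d i) (\<rho> i \<circ> ?\<iota>')"
      by (rule is_simple_repD(1)[OF is_simple_rep_comp_alg_auto[OF is_alg_auto_inv[OF \<iota>] rho_simple[OF i]]])
    thus "(\<Sum>x\<in>G. ?c i * mat_trace (\<rho> i u * (\<rho> i (?\<iota>' (b x)) * \<rho> i v * \<rho> i (ring_inv (b x))))) =
        ?c i * mat_trace (\<rho> i u * average (d i) (d i) (\<rho> i \<circ> ?\<iota>') (\<rho> i) (\<rho> i v))"
      using mat_trace_mult_average[OF _ rho_rep[OF i] rho_carrier[OF i] rho_carrier[OF i]]
      by (simp add: sum_distrib_left)
  qed
  finally show ?thesis .
qed

lemma twisted_summand_stable:
  assumes \<iota>: "is_alg_auto s \<iota>" and i: "i \<in> {1..r'}"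
    and J: "J \<in> carrier_mat (d i) (d i)" "invertible_mat J" "\<And>e. J * \<rho> i e = \<rho> i (\<iota> e) * J"
  shows "of_nat (d i) / of_nat (card G) *
      mat_trace (\<rho> i u * average (d i) (d i) (\<rho> i \<circ> inv_into UNIV \<iota>) (\<rho> i) (\<rho> i v))
    = mat_trace (\<rho> i v * J) * mat_trace (mat_inv J * \<rho> i u)"
proof -
  note \<rho>c = rho_carrier[OF i] and Kc = mat_inv_correct(1)[OF J(1,2)]
  have "of_nat (d i) / of_nat (card G) *
      mat_trace (\<rho> i u * average (d i) (d i) (\<rho> i \<circ> inv_into UNIV \<iota>) (\<rho> i) (\<rho> i v))
    = of_nat (d i) / of_nat (card G) *
      mat_trace (\<rho> i u * ((of_nat (card G) / of_nat (d i) * mat_trace (J * \<rho> i v)) \<cdot>\<^sub>m mat_inv J))"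
    unfolding average_comp_inv_auto_stable[OF alg_closed \<iota> rho_simple[OF i] J \<rho>c] ..
  also have "\<dots> = mat_trace (J * \<rho> i v) * mat_trace (\<rho> i u * mat_inv J)"
    using mult_smult_distrib[OF \<rho>c Kc] mat_trace_smult[OF mult_carrier_mat[OF \<rho>c Kc]]
      of_nat_card_carrier_nonzero is_simple_repD(2)[OF rho_simple[OF i]]
    by simp
  finally show ?thesis
    using mat_trace_mult_comm[OF J(1) \<rho>c] mat_trace_mult_comm[OF \<rho>c Kc] by simp
qed

theorem lin_trace_twisted_mult_eq_sum_stable:
  assumes \<iota>: "is_alg_auto s \<iota>" and rr': "r \<le> r'"
    and stable_iff: "\<forall>i\<in>{1..r'}. i \<le> r \<longleftrightarrow>
      (\<exists>K\<in>carrier_mat (d i) (d i). invertible_mat K \<and> (\<forall>e. K * \<rho> i e = \<rho> i (\<iota> e) * K))"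
    and J: "\<forall>i\<in>{1..r}. J i \<in> carrier_mat (d i) (d i) \<and> invertible_mat (J i) \<and>
      (\<forall>e. J i * \<rho> i e = \<rho> i (\<iota> e) * J i)"
  shows "(\<Sum>i=1..r. mat_trace (\<rho> i v * J i) * mat_trace (mat_inv (J i) * \<rho> i u))
    = lin_trace s UNIV (\<lambda>e. u * inv_into UNIV \<iota> e * v)"
proof -
  define g where "g i = of_nat (d i) / of_nat (card G) *
    mat_trace (\<rho> i u * average (d i) (d i) (\<rho> i \<circ> inv_into UNIV \<iota>) (\<rho> i) (\<rho> i v))" for i
  have unstable: "g i = 0" if i: "i \<in> {1..r'}" "\<not> i \<le> r" for i
    using average_comp_inv_auto_unstable[OF \<iota> rho_simple[OF i(1)] rho_carrier[OF i(1)]] stable_iff i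
      right_mult_zero_mat[OF rho_carrier[OF i(1)]]
    unfolding g_def by auto
  have "lin_trace s UNIV (\<lambda>e. u * inv_into UNIV \<iota> e * v) = (\<Sum>i\<in>{1..r'}. g i)"
    unfolding g_def by (rule lin_trace_twisted_mult[OF \<iota>])
  also have "\<dots> = (\<Sum>i\<in>{1..r}. g i)"
    by (rule sum.mono_neutral_right) (use rr' unstable in auto)
  also have "\<dots> = (\<Sum>i=1..r. mat_trace (\<rho> i v * J i) * mat_trace (mat_inv (J i) * \<rho> i u))"
    using J rr' unfolding g_def by (intro sum.cong refl twisted_summand_stable[OF \<iota>]) auto
  finally show ?thesis by simp
qed

end

theorem mainTheorem14:
  fixes \<Gamma> :: "('g, 'h) monoid_scheme"
    and s :: "'k::field_char_0 \<Rightarrow> 'e::ring_1 \<Rightarrow> 'e"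
    and Eg :: "'g \<Rightarrow> 'e set"
    and b :: "'g \<Rightarrow> 'e"
    and \<iota> :: "'e \<Rightarrow> 'e"
    and r r' :: nat
    and d :: "nat \<Rightarrow> nat"
    and \<rho> :: "nat \<Rightarrow> 'e \<Rightarrow> 'k mat"
    and J :: "nat \<Rightarrow> 'k mat"
    and w w' :: 'g
  assumes closed: "alg_closed_field TYPE('k)"
    and grp: "group \<Gamma>" and fin: "finite (carrier \<Gamma>)"
    and alg: "is_algebra s"
    and Eg_sub: "\<forall>x\<in>carrier \<Gamma>. module.subspace s (Eg x)"
    and Eg_dim: "\<forall>x\<in>carrier \<Gamma>. vector_space.dim s (Eg x) = 1"
    and Eg_dsum: "\<forall>e. \<exists>!f. (\<forall>x\<in>carrier \<Gamma>. f x \<in> Eg x) \<and> (\<forall>x. x \<notin> carrier \<Gamma> \<longrightarrow> f x = 0)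
                          \<and> e = (\<Sum>x\<in>carrier \<Gamma>. f x)"
    and Eg_mult: "\<forall>x\<in>carrier \<Gamma>. \<forall>y\<in>carrier \<Gamma>.
                    {u * v | u v. u \<in> Eg x \<and> v \<in> Eg y} = Eg (x \<otimes>\<^bsub>\<Gamma>\<^esub> y)"
    and b_in: "\<forall>x\<in>carrier \<Gamma>. b x \<in> Eg x \<and> b x \<noteq> 0"
    and auto: "is_alg_auto s \<iota>"
    and rr': "r \<le> r'"
    and simple: "\<forall>i\<in>{1..r'}. is_simple_rep s (d i) (\<rho> i)"
    and distinct: "\<forall>i\<in>{1..r'}. \<forall>j\<in>{1..r'}. rep_iso (d i) (\<rho> i) (d j) (\<rho> j) \<longrightarrow> i = j"
    and complete: "\<forall>n \<sigma>. is_simple_rep s n \<sigma> \<longrightarrow> (\<exists>i\<in>{1..r'}. rep_iso n \<sigma> (d i) (\<rho> i))"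
    and stable_iff: "\<forall>i\<in>{1..r'}. i \<le> r \<longleftrightarrow>
                       (\<exists>K \<in> carrier_mat (d i) (d i). invertible_mat K \<and>
                          (\<forall>e. K * \<rho> i e = \<rho> i (\<iota> e) * K))"
    and J: "\<forall>i\<in>{1..r}. J i \<in> carrier_mat (d i) (d i) \<and> invertible_mat (J i) \<and>
                          (\<forall>e. J i * \<rho> i e = \<rho> i (\<iota> e) * J i)"
    and w: "w \<in> carrier \<Gamma>" and w': "w' \<in> carrier \<Gamma>"
  shows "(\<Sum>i=1..r. mat_trace (\<rho> i (b w) * J i) *
                    mat_trace (mat_inv (J i) * \<rho> i (ring_inv (b w'))))
         = lin_trace s UNIV (\<lambda>e. ring_inv (b w') * inv_into UNIV \<iota> e * b w)"
proof -
  interpret twisted_group_algebra_simples s \<Gamma> Eg b r' d \<rho>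
    unfolding twisted_group_algebra_simples_def twisted_group_algebra_simples_axioms_def
      twisted_group_algebra_def twisted_group_algebra_axioms_def k_algebra_def
    by (intro conjI; fact assms)
  txt \<open>The identity holds for arbitrary elements in place of \<open>b w\<close> and \<open>ring_inv (b w')\<close>.\<close>
  show ?thesis by (rule lin_trace_twisted_mult_eq_sum_stable[OF auto rr' stable_iff J])
qed

end
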